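(* A PPT three-mode CM $\gamma$ is fully separable if and only if there exists a one-mode CM $\gamma_A$ such that $$\tilde N\ge\gamma_A\quad\text{and}\quad N\ge\gamma_A .$$ Moreover, $\gamma_A$ can be required without loss of generality to be pure, i.e. $\det\gamma_A=1$.
   Context: Conventions: Three modes $A,B,C$, phase-space vectors ordered mode-wise as $(q_A,p_A,q_B,p_B,q_C,p_C)$. $J_1=\begin{pmatrix}0&-1\\1&0\end{pmatrix}$, $J=J_1\oplus J_1\oplus J_1$. A CM of $n$ modes is a real symmetric $2n\times2n$ matrix $\gamma>0$ with $\gamma-iJ\ge0$ (for one mode: $\gamma-iJ_1\ge0$); it is pure if $\det\gamma=1$. $X\ge Y$ means $X-Y$ is positive semidefinite (Hermitian matrices). For $x\in\{A,B,C\}$, $\tilde J_x$ is $J$ with the $2\times2$ diagonal block of mode $x$ replaced by $-J_1$, and $\tilde J_0=J$. A three-mode CM $\gamma$ is called PPT if $\gamma\ge i\tilde J_x$ for all $x\in\{0,A,B,C\}$, and fully separable if there exist one-mode CMs $\gamma_A,\gamma_B,\gamma_C$ with $\gamma\ge\gamma_A\oplus\gamma_B\oplus\gamma_C$. Write $\gamma=\begin{pmatrix}A&C\\C^T&B\end{pmatrix}$ with $A$ the $2\times2$ block of mode $A$, $B$ the $4\times4$ block of modes $B,C$, $C$ the $2\times4$ off-diagonal block; let $J_{BC}=J_1\oplus J_1$, $\tilde J_{BC}=J_1\oplus(-J_1)$, and define the (Hermitian, possibly complex) $2\times2$ matrices $$N=A-C(B-iJ_{BC})^{-1}C^T,\qquad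 \tilde N=A-C(B-i\tilde J_{BC})^{-1}C^T,$$ where the inverses are Moore–Penrose pseudoinverses (inversion on the range); these are well defined because $\ker(B-iJ_{BC}),\ker(B-i\tilde J_{BC})\subseteq\ker C$ for PPT $\gamma$. *)

theory Defs
  imports "Jordan_Normal_Form.Schur_Decomposition"
begin

definition cmat :: "real mat \<Rightarrow> complex mat" where
  "cmat M = map_mat complex_of_real M"

definition psd :: "complex mat \<Rightarrow> bool" where
  "psd M \<longleftrightarrow> M \<in> carrier_mat (dim_row M) (dim_row M) \<and> mat_adjoint M = M \<and>
     (\<forall>v \<in> carrier_vec (dim_row M). 0 \<le> Re ((M *\<^sub>v v) \<bullet>c v))"

definition loewner_ge :: "complex mat \<Rightarrow> complex mat \<Rightarrow> bool" where
  "loewner_ge X Y \<longleftrightarrow> dim_row X = dim_row Y \<and> dim_col X = dim_col Y \<and> psd (X - Y)"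

definition real_pd :: "real mat \<Rightarrow> bool" where
  "real_pd M \<longleftrightarrow> M \<in> carrier_mat (dim_row M) (dim_row M) \<and>
     (\<forall>x \<in> carrier_vec (dim_row M). x \<noteq> 0\<^sub>v (dim_row M) \<longrightarrow> 0 < x \<bullet> (M *\<^sub>v x))"

text \<open>Mode-wise block-diagonal symplectic-type matrix on n modes: the 2x2 diagonal
  block of mode k is J1 = [[0,-1],[1,0]] if k is not in S and -J1 if k is in S.
  So Jmodes n {} = J1 \<oplus> ... \<oplus> J1, and flipping mode k gives the partially
  transposed form.\<close>
definition Jmodes :: "nat \<Rightarrow> nat set \<Rightarrow> complex mat" where
  "Jmodes n S = mat (2*n) (2*n) (\<lambda>(i,j).
     (if i div 2 = j div 2 then
        (if i mod 2 = 0 \<and> j mod 2 = 1 then -1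
         else if i mod 2 = 1 \<and> j mod 2 = 0 then 1 else 0)
      else 0) * (if i div 2 \<in> S then -1 else 1))"

definition is_CM :: "nat \<Rightarrow> real mat \<Rightarrow> bool" where
  "is_CM n \<gamma> \<longleftrightarrow> \<gamma> \<in> carrier_mat (2*n) (2*n) \<and> transpose_mat \<gamma> = \<gamma> \<and> real_pd \<gamma> \<and>
     loewner_ge (cmat \<gamma>) (\<i> \<cdot>\<^sub>m Jmodes n {})"

definition dsum :: "'a::zero mat \<Rightarrow> 'a mat \<Rightarrow> 'a mat" where
  "dsum X Y = four_block_mat X (0\<^sub>m (dim_row X) (dim_col Y)) (0\<^sub>m (dim_row Y) (dim_col X)) Y"

text \<open>PPT three-mode CM: gamma \<ge> i J~_x for x in {0,A,B,C} (modes A,B,C = 0,1,2).\<close>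
definition PPT :: "real mat \<Rightarrow> bool" where
  "PPT \<gamma> \<longleftrightarrow> (\<forall>S \<in> {{}, {0}, {1}, {2::nat}}. loewner_ge (cmat \<gamma>) (\<i> \<cdot>\<^sub>m Jmodes 3 S))"

definition fully_separable :: "real mat \<Rightarrow> bool" where
  "fully_separable \<gamma> \<longleftrightarrow> (\<exists>\<gamma>A \<gamma>B \<gamma>C. is_CM 1 \<gamma>A \<and> is_CM 1 \<gamma>B \<and> is_CM 1 \<gamma>C \<and>
     loewner_ge (cmat \<gamma>) (cmat (dsum \<gamma>A (dsum \<gamma>B \<gamma>C))))"

definition pinv :: "complex mat \<Rightarrow> complex mat" where
  "pinv M = (THE X. X \<in> carrier_mat (dim_col M) (dim_row M) \<and>
     M * X * M = M \<and> X * M * X = X \<and>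
     mat_adjoint (M * X) = M * X \<and> mat_adjoint (X * M) = X * M)"

text \<open>Blocks: gamma = [[A, C], [C^T, B]], A 2x2 (mode A), B 4x4 (modes B,C), C 2x4.\<close>
definition blkA :: "real mat \<Rightarrow> real mat" where "blkA \<gamma> = fst (split_block \<gamma> 2 2)"
definition blkC :: "real mat \<Rightarrow> real mat" where "blkC \<gamma> = fst (snd (split_block \<gamma> 2 2))"
definition blkB :: "real mat \<Rightarrow> real mat" where "blkB \<gamma> = snd (snd (snd (split_block \<gamma> 2 2)))"

text \<open>N = A - C (B - i J_BC)^+ C^T and N~ = A - C (B - i J~_BC)^+ C^T,
  with J_BC = J1 \<oplus> J1 and J~_BC = J1 \<oplus> (-J1).\<close>
definition Nmat :: "real mat \<Rightarrow> complex mat" where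
  "Nmat \<gamma> = cmat (blkA \<gamma>) -
     cmat (blkC \<gamma>) * pinv (cmat (blkB \<gamma>) - \<i> \<cdot>\<^sub>m Jmodes 2 {}) * cmat (transpose_mat (blkC \<gamma>))"

definition Ntmat :: "real mat \<Rightarrow> complex mat" where
  "Ntmat \<gamma> = cmat (blkA \<gamma>) -
     cmat (blkC \<gamma>) * pinv (cmat (blkB \<gamma>) - \<i> \<cdot>\<^sub>m Jmodes 2 {1}) * cmat (transpose_mat (blkC \<gamma>))"

end

theory Submission
  imports Defs
begin

(* By the generalised Schur complement, N >= R holds iff gamma >= R (+) iJ_BC, and N~ >= R iff
   gamma >= R (+) iJ~_BC; the CM and PPT conditions provide the kernel inclusions that let the
   pseudoinverse act as an inverse.  A Hermitian 2x2 matrix K with K >= +-iJ_1 lies above a pure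
   one-mode CM, namely a rescaling of Re K.

   If gamma >= gamma_A (+) gamma_B (+) gamma_C, replacing gamma_A by a pure CM below it and gamma_B,
   gamma_C by +-iJ_1 gives both bounds on gamma.  Conversely, if gamma >= gamma_A (+) iJ_1 (+) +-iJ_1,
   then W = gamma - gamma_A (+) 0 is real, so complex conjugation yields all sign combinations on
   modes B and C; the Schur complement argument for a single mode then replaces iJ_1 on mode B, and
   afterwards on mode C, by a genuine one-mode CM. *)

section \<open>Matrix algebra and the complex inner product\<close>

lemma mult_mat_vec_zero [simp]: "A \<in> carrier_mat n m \<Longrightarrow> A *\<^sub>v 0\<^sub>v m = (0\<^sub>v n :: 'a :: semiring_0 vec)"
  by (rule eq_vecI) (auto simp: scalar_prod_def)

lemma zero_mult_mat_vec [simp]: "v \<in> carrier_vec m \<Longrightarrow> 0\<^sub>m n m *\<^sub>v v = (0\<^sub>v n :: 'a :: semiring_0 vec)"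
  by (rule eq_vecI) (auto simp: scalar_prod_def)

lemma smult_mult_mat_vec:
  "dim_vec v = dim_col A \<Longrightarrow> (c \<cdot>\<^sub>m A) *\<^sub>v v = c \<cdot>\<^sub>v (A *\<^sub>v (v :: 'a :: comm_semiring_0 vec))"
  by (rule eq_vecI) (simp_all add: scalar_prod_def sum_distrib_left mult.assoc)

lemma zero_smult_vec [simp]: "(0 :: 'a :: semiring_0) \<cdot>\<^sub>v v = 0\<^sub>v (dim_vec v)"
  by (rule eq_vecI) simp_all

lemma minus_add_cancel_vec:
  "u \<in> carrier_vec n \<Longrightarrow> v \<in> carrier_vec n \<Longrightarrow> u - v + v = (u :: 'a :: group_add vec)"
  by (rule eq_vecI) simp_all

lemma mult_mat_vec_unit_vec:
  "(A :: 'a :: semiring_1 mat) \<in> carrier_mat n m \<Longrightarrow> j < m \<Longrightarrow> A *\<^sub>v unit_vec m j = col A j"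
  by (rule eq_vecI) auto

lemma minus_vec_eq_0D:
  assumes "(a :: 'a :: group_add vec) \<in> carrier_vec n" "b \<in> carrier_vec n" "a - b = 0\<^sub>v n"
  shows "a = b"
proof (rule eq_vecI)
  fix i assume "i < dim_vec b"
  then have "(a - b) $ i = 0" using assms by simp
  then show "a $ i = b $ i" using \<open>i < dim_vec b\<close> assms(2) by simp
qed (use assms in simp)

lemma minus_mat_right_cancel:
  "A \<in> carrier_mat n m \<Longrightarrow> B \<in> carrier_mat n m \<Longrightarrow> T \<in> carrier_mat n m \<Longrightarrow>
   A - T = B - (T :: 'a :: group_add mat) \<Longrightarrow> A = B"
proof (rule eq_matI)
  fix i j assume ij: "i < dim_row B" "j < dim_col B"
  assume "A \<in> carrier_mat n m" "B \<in> carrier_mat n m" "T \<in> carrier_mat n m" and eq: "A - T = B - T"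
  then have "(A - T) $$ (i,j) = (B - T) $$ (i,j)" by simp
  with ij \<open>A \<in> carrier_mat n m\<close> \<open>B \<in> carrier_mat n m\<close> \<open>T \<in> carrier_mat n m\<close>
  show "A $$ (i,j) = B $$ (i,j)" by (metis diff_add_cancel index_minus_mat(1) carrier_matD)
qed auto

lemma minus_minus_mat_commute:
  "A \<in> carrier_mat n m \<Longrightarrow> B \<in> carrier_mat n m \<Longrightarrow> C \<in> carrier_mat n m \<Longrightarrow>
   A - B - C = A - C - (B :: 'a :: ab_group_add mat)"
  by (rule eq_matI) auto

lemma minus_eq_minus_add_minus:
  "X \<in> carrier_mat n m \<Longrightarrow> D \<in> carrier_mat n m \<Longrightarrow> D' \<in> carrier_mat n m \<Longrightarrow>
   X - D' = (X - D) + (D - (D' :: 'a :: ab_group_add mat))"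
  by (rule eq_matI) auto

lemma assoc_mult_mat_vec3:
  assumes "A \<in> carrier_mat n m" "B \<in> carrier_mat m l" "D \<in> carrier_mat l k" "u \<in> carrier_vec k"
  shows "(A * B * D) *\<^sub>v u = A *\<^sub>v (B *\<^sub>v (D *\<^sub>v (u :: 'a :: comm_semiring_0 vec)))"
proof -
  have "(A * B * D) *\<^sub>v u = (A * B) *\<^sub>v (D *\<^sub>v u)"
    by (rule assoc_mult_mat_vec[OF mult_carrier_mat[OF assms(1,2)] assms(3,4)])
  also have "\<dots> = A *\<^sub>v (B *\<^sub>v (D *\<^sub>v u))"
    by (rule assoc_mult_mat_vec[OF assms(1,2) mult_mat_vec_carrier[OF assms(3,4)]])
  finally show ?thesis .
qed

lemma eq_mat_by_mult_mat_vec: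
  fixes A :: "'a :: semiring_1 mat"
  assumes "A \<in> carrier_mat n m" "B \<in> carrier_mat n m" "\<And>v. v \<in> carrier_vec m \<Longrightarrow> A *\<^sub>v v = B *\<^sub>v v"
  shows "A = B"
proof (rule eq_matI)
  fix i j assume "i < dim_row B" "j < dim_col B"
  with assms(1,2) have "A $$ (i,j) = (A *\<^sub>v unit_vec m j) $ i" "B $$ (i,j) = (B *\<^sub>v unit_vec m j) $ i"
    by simp_all
  then show "A $$ (i,j) = B $$ (i,j)" using assms(3)[of "unit_vec m j"] by simp
qed (use assms in auto)

lemma mat_adjoint_altdef:
  "mat_adjoint (A::complex mat) = mat (dim_col A) (dim_row A) (\<lambda>(i,j). cnj (A $$ (j,i)))"
  unfolding mat_adjoint_def mat_of_rows_def by (rule eq_matI) (auto simp: conjugate_complex_def)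

lemma dim_mat_adjoint [simp]:
  "dim_row (mat_adjoint (A::complex mat)) = dim_col A"
  "dim_col (mat_adjoint (A::complex mat)) = dim_row A"
  by (auto simp: mat_adjoint_altdef)

lemma index_mat_adjoint [simp]:
  "i < dim_col A \<Longrightarrow> j < dim_row A \<Longrightarrow> mat_adjoint (A::complex mat) $$ (i,j) = cnj (A $$ (j,i))"
  by (auto simp: mat_adjoint_altdef)

lemma hermitian_index:
  "mat_adjoint (M::complex mat) = M \<Longrightarrow> M \<in> carrier_mat n n \<Longrightarrow> i < n \<Longrightarrow> j < n \<Longrightarrow>
   cnj (M $$ (j,i)) = M $$ (i,j)"
  by (metis carrier_matD index_mat_adjoint)

lemma mat_adjoint_carrier [simp]:
  "(A::complex mat) \<in> carrier_mat n m \<Longrightarrow> mat_adjoint A \<in> carrier_mat m n"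
  unfolding carrier_mat_def by simp

lemma mat_adjoint_adjoint [simp]: "mat_adjoint (mat_adjoint (A::complex mat)) = A"
  by (rule eq_matI) simp_all

lemma mat_adjoint_mult:
  assumes "(A::complex mat) \<in> carrier_mat n k" "B \<in> carrier_mat k m"
  shows "mat_adjoint (A * B) = mat_adjoint B * mat_adjoint A"
proof (rule eq_matI)
  fix i j
  assume "i < dim_row (mat_adjoint B * mat_adjoint A)" "j < dim_col (mat_adjoint B * mat_adjoint A)"
  with assms show "mat_adjoint (A * B) $$ (i,j) = (mat_adjoint B * mat_adjoint A) $$ (i,j)"
    by (auto simp: scalar_prod_def cnj_sum mult.commute)
qed (use assms in auto)

lemma mat_adjoint_add:
  "(A::complex mat) \<in> carrier_mat n m \<Longrightarrow> B \<in> carrier_mat n m \<Longrightarrow>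
   mat_adjoint (A + B) = mat_adjoint A + mat_adjoint B"
  by (rule eq_matI) auto

lemma mat_adjoint_minus:
  "(A::complex mat) \<in> carrier_mat n m \<Longrightarrow> B \<in> carrier_mat n m \<Longrightarrow>
   mat_adjoint (A - B) = mat_adjoint A - mat_adjoint B"
  by (rule eq_matI) auto

lemma mat_adjoint_zero [simp]: "mat_adjoint (0\<^sub>m n m :: complex mat) = 0\<^sub>m m n"
  by (rule eq_matI) auto

lemma mat_adjoint_smult: "mat_adjoint (c \<cdot>\<^sub>m (A::complex mat)) = cnj c \<cdot>\<^sub>m mat_adjoint A"
  by (rule eq_matI) auto

lemma mat_adjoint_four_block_mat:
  assumes "(A::complex mat) \<in> carrier_mat k k" "B \<in> carrier_mat k m"
    "C \<in> carrier_mat m k" "D \<in> carrier_mat m m"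
  shows "mat_adjoint (four_block_mat A B C D) =
    four_block_mat (mat_adjoint A) (mat_adjoint C) (mat_adjoint B) (mat_adjoint D)"
  by (rule eq_matI) (use assms in auto)

lemma mat_adjoint_sandwich:
  assumes C: "(C::complex mat) \<in> carrier_mat k m" and G: "G \<in> carrier_mat m m"
    and hG: "mat_adjoint G = G"
  shows "mat_adjoint (C * G * mat_adjoint C) = C * G * mat_adjoint C"
  using mat_adjoint_mult[OF mult_carrier_mat[OF C G] mat_adjoint_carrier[OF C]]
    mat_adjoint_mult[OF C G] hG assoc_mult_mat[OF C G mat_adjoint_carrier[OF C]]
  by simp

lemma hermitian_if_minus_hermitian:
  assumes "(X::complex mat) \<in> carrier_mat n n" "S \<in> carrier_mat n n"
    and "mat_adjoint (X - S) = X - S" "mat_adjoint S = S"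
  shows "mat_adjoint X = X"
proof (rule minus_mat_right_cancel[OF mat_adjoint_carrier[OF assms(1)] assms(1,2)])
  show "mat_adjoint X - S = X - S" using assms(3,4) mat_adjoint_minus[OF assms(1,2)] by simp
qed

lemma carrier_cmat_iff [simp]: "cmat M \<in> carrier_mat n m \<longleftrightarrow> M \<in> carrier_mat n m"
  unfolding carrier_mat_def cmat_def by simp

lemma dim_cmat [simp]: "dim_row (cmat M) = dim_row M" "dim_col (cmat M) = dim_col M"
  by (auto simp: cmat_def)

lemma index_cmat [simp]:
  "i < dim_row M \<Longrightarrow> j < dim_col M \<Longrightarrow> cmat M $$ (i,j) = complex_of_real (M $$ (i,j))"
  by (auto simp: cmat_def)

lemma mat_adjoint_cmat: "mat_adjoint (cmat M) = cmat (transpose_mat M)"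
  by (rule eq_matI) auto

lemma map_cnj_cmat [simp]: "map_mat cnj (cmat M) = cmat M"
  by (rule eq_matI) auto

lemma map_cnj_minus_mat:
  "A \<in> carrier_mat n m \<Longrightarrow> B \<in> carrier_mat n m \<Longrightarrow> map_mat cnj (A - B) = map_mat cnj A - map_mat cnj B"
  by (rule eq_matI) auto

lemma map_cnj_zero_mat [simp]: "map_mat cnj (0\<^sub>m n m) = 0\<^sub>m n m"
  by (rule eq_matI) auto

lemma cscalar_prod_mat_adjoint:
  assumes A: "(A::complex mat) \<in> carrier_mat n m" and u: "u \<in> carrier_vec m" and v: "v \<in> carrier_vec n"
  shows "(A *\<^sub>v u) \<bullet>c v = u \<bullet>c (mat_adjoint A *\<^sub>v v)"
proof -
  have "(A *\<^sub>v u) \<bullet>c v = (\<Sum>i<n. \<Sum>j<m. A $$ (i,j) * u $ j * cnj (v $ i))"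
    using A u v by (simp add: scalar_prod_def lessThan_atLeast0 sum_distrib_right)
  also have "\<dots> = (\<Sum>j<m. \<Sum>i<n. A $$ (i,j) * u $ j * cnj (v $ i))"
    by (rule sum.swap)
  also have "\<dots> = u \<bullet>c (mat_adjoint A *\<^sub>v v)"
    using A u v by (simp add: scalar_prod_def lessThan_atLeast0 sum_distrib_left cnj_sum mult_ac)
  finally show ?thesis .
qed

lemma cscalar_prod_swap:
  "u \<in> carrier_vec n \<Longrightarrow> (v::complex vec) \<in> carrier_vec n \<Longrightarrow> u \<bullet>c v = cnj (v \<bullet>c u)"
  by (simp add: scalar_prod_def cnj_sum mult.commute)

lemma cscalar_prod_add_left:
  "u \<in> carrier_vec n \<Longrightarrow> v \<in> carrier_vec n \<Longrightarrow> (w::complex vec) \<in> carrier_vec n \<Longrightarrow>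
   (u + v) \<bullet>c w = u \<bullet>c w + v \<bullet>c w"
  by (simp add: scalar_prod_def sum.distrib algebra_simps)

lemma cscalar_prod_add_right:
  "u \<in> carrier_vec n \<Longrightarrow> v \<in> carrier_vec n \<Longrightarrow> (w::complex vec) \<in> carrier_vec n \<Longrightarrow>
   u \<bullet>c (v + w) = u \<bullet>c v + u \<bullet>c w"
  by (simp add: scalar_prod_def sum.distrib algebra_simps)

lemma cscalar_prod_minus_left:
  "u \<in> carrier_vec n \<Longrightarrow> v \<in> carrier_vec n \<Longrightarrow> (w::complex vec) \<in> carrier_vec n \<Longrightarrow>
   (u - v) \<bullet>c w = u \<bullet>c w - v \<bullet>c w"
  by (simp add: scalar_prod_def sum_subtractf algebra_simps)

lemma cscalar_prod_smult_left:
  "u \<in> carrier_vec n \<Longrightarrow> (w::complex vec) \<in> carrier_vec n \<Longrightarrow> (c \<cdot>\<^sub>v u) \<bullet>c w = c * (u \<bullet>c w)"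
  by (simp add: scalar_prod_def sum_distrib_left algebra_simps)

lemma cscalar_prod_smult_right:
  "u \<in> carrier_vec n \<Longrightarrow> (w::complex vec) \<in> carrier_vec n \<Longrightarrow> u \<bullet>c (c \<cdot>\<^sub>v w) = cnj c * (u \<bullet>c w)"
  by (simp add: scalar_prod_def sum_distrib_left algebra_simps)

lemma cscalar_prod_zero_left [simp]: "(w::complex vec) \<in> carrier_vec n \<Longrightarrow> 0\<^sub>v n \<bullet>c w = 0"
  by (simp add: scalar_prod_def)

lemma cscalar_prod_zero_right [simp]: "(w::complex vec) \<in> carrier_vec n \<Longrightarrow> w \<bullet>c 0\<^sub>v n = 0"
  by (simp add: scalar_prod_def)

lemma cscalar_prod_self: "(v::complex vec) \<bullet>c v = complex_of_real (\<Sum>i<dim_vec v. (cmod (v $ i))\<^sup>2)"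
  by (simp add: scalar_prod_def lessThan_atLeast0 complex_norm_square del: of_real_power)

lemma Re_cscalar_prod_self_nonneg: "0 \<le> Re ((v::complex vec) \<bullet>c v)"
  unfolding cscalar_prod_self by (simp add: sum_nonneg)

lemma cscalar_prod_self_eq_0:
  assumes "Re ((v::complex vec) \<bullet>c v) = 0" shows "v = 0\<^sub>v (dim_vec v)"
proof (rule eq_vecI)
  fix i assume "i < dim_vec (0\<^sub>v (dim_vec v))"
  moreover have "\<forall>i\<in>{..<dim_vec v}. (cmod (v $ i))\<^sup>2 = 0"
    using assms unfolding cscalar_prod_self by (subst sum_nonneg_eq_0_iff[symmetric]) auto
  ultimately show "v $ i = 0\<^sub>v (dim_vec v) $ i" by simp
qed simp

lemma cscalar_prod_append:
  "u \<in> carrier_vec k \<Longrightarrow> w \<in> carrier_vec m \<Longrightarrow> u' \<in> carrier_vec k \<Longrightarrow> (w'::complex vec) \<in> carrier_vec m \<Longrightarrow>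
   (u @\<^sub>v w) \<bullet>c (u' @\<^sub>v w') = u \<bullet>c u' + w \<bullet>c w'"
  by (subst scalar_prod_append[symmetric]) (auto intro!: arg_cong2[where f = "(\<bullet>)"] eq_vecI)

lemma cscalar_prod_four_block_mat:
  assumes A: "(A::complex mat) \<in> carrier_mat k k" and B: "B \<in> carrier_mat k m"
    and C: "C \<in> carrier_mat m k" and D: "D \<in> carrier_mat m m"
    and u: "u \<in> carrier_vec k" and w: "w \<in> carrier_vec m"
  shows "(four_block_mat A B C D *\<^sub>v (u @\<^sub>v w)) \<bullet>c (u @\<^sub>v w) =
    (A *\<^sub>v u) \<bullet>c u + (B *\<^sub>v w) \<bullet>c u + (C *\<^sub>v u) \<bullet>c w + (D *\<^sub>v w) \<bullet>c w"
  using assms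
  by (simp add: four_block_mat_mult_vec cscalar_prod_append[of _ k _ m]
      cscalar_prod_add_left[of _ k] cscalar_prod_add_left[of _ m])

section \<open>Positive semidefinite matrices\<close>

lemma psdI:
  assumes "M \<in> carrier_mat n n" "mat_adjoint M = M"
    "\<And>v. v \<in> carrier_vec n \<Longrightarrow> 0 \<le> Re ((M *\<^sub>v v) \<bullet>c v)"
  shows "psd M"
  using assms unfolding psd_def by auto

lemma psd_hermitian: "psd M \<Longrightarrow> mat_adjoint M = M"
  unfolding psd_def by simp

lemma psd_nonneg: "psd M \<Longrightarrow> M \<in> carrier_mat n n \<Longrightarrow> v \<in> carrier_vec n \<Longrightarrow> 0 \<le> Re ((M *\<^sub>v v) \<bullet>c v)"
  unfolding psd_def by auto

lemma psd_add:
  assumes A: "psd A" "A \<in> carrier_mat n n" and B: "psd B" "B \<in> carrier_mat n n"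
  shows "psd (A + B)"
proof (rule psdI)
  show "A + B \<in> carrier_mat n n" using A B by simp
  show "mat_adjoint (A + B) = A + B"
    using A B by (simp add: mat_adjoint_add psd_hermitian)
  fix v :: "complex vec" assume v: "v \<in> carrier_vec n"
  have "((A + B) *\<^sub>v v) \<bullet>c v = (A *\<^sub>v v) \<bullet>c v + (B *\<^sub>v v) \<bullet>c v"
    using A B v by (simp add: add_mult_distrib_mat_vec cscalar_prod_add_left[of _ n])
  then show "0 \<le> Re (((A + B) *\<^sub>v v) \<bullet>c v)"
    using psd_nonneg[OF A v] psd_nonneg[OF B v] by simp
qed

lemma psd_map_cnj:
  assumes M: "psd M" shows "psd (map_mat cnj M)"
proof -
  define n where "n = dim_row M"
  have Mc: "M \<in> carrier_mat n n" using M unfolding psd_def n_def by simp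
  note herm = hermitian_index[OF psd_hermitian[OF M] Mc]
  show ?thesis
  proof (rule psdI)
    show "map_mat cnj M \<in> carrier_mat n n" using Mc by simp
    show "mat_adjoint (map_mat cnj M) = map_mat cnj M"
      by (rule eq_matI) (use Mc herm in auto)
    fix v :: "complex vec" assume v: "v \<in> carrier_vec n"
    have "(map_mat cnj M *\<^sub>v v) \<bullet>c v = cnj ((M *\<^sub>v map_vec cnj v) \<bullet>c map_vec cnj v)"
      using v Mc by (simp add: scalar_prod_def cnj_sum)
    then show "0 \<le> Re ((map_mat cnj M *\<^sub>v v) \<bullet>c v)"
      using psd_nonneg[OF M Mc, of "map_vec cnj v"] v by simp
  qed
qed

lemma psd_minus_map_cnj:
  assumes "map_mat cnj W = W" "W \<in> carrier_mat n n" "D \<in> carrier_mat n n" "psd (W - D)"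
  shows "psd (W - map_mat cnj D)"
  using psd_map_cnj[OF assms(4)] map_cnj_minus_mat[OF assms(2,3)] assms(1) by simp

lemma psd_four_block_matD:
  assumes A: "(A::complex mat) \<in> carrier_mat k k" and B: "B \<in> carrier_mat k m"
    and C: "C \<in> carrier_mat m k" and D: "D \<in> carrier_mat m m"
    and P: "psd (four_block_mat A B C D)"
  shows "psd A" "psd D" "C = mat_adjoint B"
proof -
  have PC: "four_block_mat A B C D \<in> carrier_mat (k + m) (k + m)" using A D by simp
  note herm = hermitian_index[OF psd_hermitian[OF P] PC]
  have hA: "mat_adjoint A = A"
  proof (rule eq_matI)
    fix i j assume "i < dim_row A" "j < dim_col A"
    then show "mat_adjoint A $$ (i, j) = A $$ (i, j)" using herm[of i j] A B C D by auto
  qed (use A in auto)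
  have hD: "mat_adjoint D = D"
  proof (rule eq_matI)
    fix i j assume "i < dim_row D" "j < dim_col D"
    then show "mat_adjoint D $$ (i, j) = D $$ (i, j)" using herm[of "k + i" "k + j"] A B C D by auto
  qed (use D in auto)
  have "mat_adjoint B = C"
  proof (rule eq_matI)
    fix i j assume "i < dim_row C" "j < dim_col C"
    then show "mat_adjoint B $$ (i, j) = C $$ (i, j)" using herm[of "k + i" j] A B C D by auto
  qed (use B C in auto)
  then show "C = mat_adjoint B" by simp
  show "psd A"
  proof (rule psdI[OF A hA])
    fix v :: "complex vec" assume v: "v \<in> carrier_vec k"
    have "(four_block_mat A B C D *\<^sub>v (v @\<^sub>v 0\<^sub>v m)) \<bullet>c (v @\<^sub>v 0\<^sub>v m) = (A *\<^sub>v v) \<bullet>c v"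
      using A B C D v by (simp add: cscalar_prod_four_block_mat)
    then show "0 \<le> Re ((A *\<^sub>v v) \<bullet>c v)" using psd_nonneg[OF P PC] v
      by (metis append_carrier_vec zero_carrier_vec)
  qed
  show "psd D"
  proof (rule psdI[OF D hD])
    fix v :: "complex vec" assume v: "v \<in> carrier_vec m"
    have "(four_block_mat A B C D *\<^sub>v (0\<^sub>v k @\<^sub>v v)) \<bullet>c (0\<^sub>v k @\<^sub>v v) = (D *\<^sub>v v) \<bullet>c v"
      using A B C D v by (simp add: cscalar_prod_four_block_mat)
    then show "0 \<le> Re ((D *\<^sub>v v) \<bullet>c v)" using psd_nonneg[OF P PC] v
      by (metis append_carrier_vec zero_carrier_vec)
  qed
qed

lemma dsum_carrier [simp]:
  "A \<in> carrier_mat n n \<Longrightarrow> B \<in> carrier_mat m m \<Longrightarrow> dsum A B \<in> carrier_mat (n + m) (n + m)"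
  unfolding dsum_def by simp

lemma dim_dsum [simp]:
  "dim_row (dsum A B) = dim_row A + dim_row B" "dim_col (dsum A B) = dim_col A + dim_col B"
  unfolding dsum_def by simp_all

lemma dsum3_carrier:
  "a \<in> carrier_mat 2 2 \<Longrightarrow> b \<in> carrier_mat 2 2 \<Longrightarrow> c \<in> carrier_mat 2 2 \<Longrightarrow>
   dsum a (dsum b c) \<in> carrier_mat 6 6"
  using dsum_carrier[of a 2 "dsum b c" 4] dsum_carrier[of b 2 c 2] by simp

lemma dsum_assoc: "dsum A (dsum B C) = dsum (dsum A B) C"
  unfolding dsum_def by (rule assoc_four_block_mat)

lemma dsum_minus:
  assumes "A \<in> carrier_mat n n" "B \<in> carrier_mat m m" "A' \<in> carrier_mat n n" "B' \<in> carrier_mat m m"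
  shows "dsum A B - dsum A' B' = dsum (A - A') (B - (B' :: 'a :: ab_group_add mat))"
  by (rule eq_matI) (use assms in \<open>auto simp: dsum_def\<close>)

lemma smult_dsum: "c \<cdot>\<^sub>m dsum A B = dsum (c \<cdot>\<^sub>m A) (c \<cdot>\<^sub>m (B :: 'a :: semiring_0 mat))"
  by (rule eq_matI) (auto simp: dsum_def)

lemma map_mat_dsum:
  assumes "f 0 = 0" shows "map_mat f (dsum A B) = dsum (map_mat f A) (map_mat f B)"
  by (rule eq_matI) (use assms in \<open>auto simp: dsum_def\<close>)

lemma cmat_dsum: "cmat (dsum A B) = dsum (cmat A) (cmat B)"
  unfolding cmat_def by (rule map_mat_dsum) simp

lemma four_block_mat_minus_dsum:
  assumes "(X::complex mat) \<in> carrier_mat k k" "C \<in> carrier_mat k m" "C' \<in> carrier_mat m k"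
    "Y \<in> carrier_mat m m" "R \<in> carrier_mat k k" "T \<in> carrier_mat m m"
  shows "four_block_mat X C C' Y - dsum R T = four_block_mat (X - R) C C' (Y - T)"
  by (rule eq_matI) (use assms in \<open>auto simp: dsum_def\<close>)

lemma minus_dsum_split:
  assumes "X \<in> carrier_mat (k + m) (k + m)" "A \<in> carrier_mat k k" "T \<in> carrier_mat m m"
  shows "X - dsum A T = (X - dsum A (0\<^sub>m m m)) - dsum (0\<^sub>m k k) (T :: 'a :: ab_group_add mat)"
  by (rule eq_matI) (use assms in \<open>auto simp: dsum_def\<close>)

lemma psd_dsum:
  assumes A: "psd A" "A \<in> carrier_mat k k" and B: "psd B" "B \<in> carrier_mat m m"
  shows "psd (dsum A B)"
proof (rule psdI)
  have z: "0\<^sub>m k m \<in> carrier_mat k m" "0\<^sub>m m k \<in> carrier_mat m k" by auto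
  show "dsum A B \<in> carrier_mat (k + m) (k + m)" using A B by simp
  show "mat_adjoint (dsum A B) = dsum A B"
    using A B unfolding dsum_def
    by (simp add: mat_adjoint_four_block_mat[OF A(2) z B(2)] psd_hermitian)
  fix v :: "complex vec" assume v: "v \<in> carrier_vec (k + m)"
  define u w where "u = vec_first v k" and "w = vec_last v m"
  have u: "u \<in> carrier_vec k" and w: "w \<in> carrier_vec m" unfolding u_def w_def by auto
  have "v = u @\<^sub>v w" unfolding u_def w_def using v by simp
  then have "(dsum A B *\<^sub>v v) \<bullet>c v = (A *\<^sub>v u) \<bullet>c u + (B *\<^sub>v w) \<bullet>c w"
    using A B u w cscalar_prod_four_block_mat[OF A(2) z(1) z(2) B(2) u w] unfolding dsum_def by simp
  then show "0 \<le> Re ((dsum A B *\<^sub>v v) \<bullet>c v)" using psd_nonneg[OF A u] psd_nonneg[OF B w] by simp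
qed

lemma inj_on_add_mod: "inj_on (\<lambda>i. (i + k) mod n) {..<(n::nat)}"
proof (rule inj_onI)
  have *: "i = j" if "i \<le> j" "j < n" "(i + k) mod n = (j + k) mod n" for i j
  proof -
    have "n dvd j - i" using mod_eq_dvd_iff_nat[of "i + k" "j + k" n] that by simp
    then show "i = j" using nat_dvd_not_less[of "j - i" n] that by (cases "i = j") simp_all
  qed
  fix i j assume "i \<in> {..<n}" "j \<in> {..<n}" "(i + k) mod n = (j + k) mod n"
  then show "i = j" using *[of i j] *[of j i] by (cases "i \<le> j") simp_all
qed

lemma bij_betw_add_mod: "bij_betw (\<lambda>i. (i + k) mod n) {..<n} {..<(n::nat)}"
proof -
  have "(\<lambda>i. (i + k) mod n) ` {..<n} = {..<n}"
    using inj_on_add_mod by (intro endo_inj_surj) auto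
  then show ?thesis unfolding bij_betw_def using inj_on_add_mod by blast
qed

lemma psd_permute:
  assumes P: "psd X" and X: "X \<in> carrier_mat n n" and \<sigma>: "bij_betw \<sigma> {..<n} {..<n}"
  shows "psd (mat n n (\<lambda>(i,j). X $$ (\<sigma> i, \<sigma> j)))"
proof (rule psdI)
  have \<sigma>n: "\<sigma> i < n" if "i < n" for i using bij_betwE[OF \<sigma>] that by blast
  note herm = hermitian_index[OF psd_hermitian[OF P] X]
  show "mat n n (\<lambda>(i,j). X $$ (\<sigma> i, \<sigma> j)) \<in> carrier_mat n n" by simp
  show "mat_adjoint (mat n n (\<lambda>(i,j). X $$ (\<sigma> i, \<sigma> j))) = mat n n (\<lambda>(i,j). X $$ (\<sigma> i, \<sigma> j))"
    by (rule eq_matI) (auto simp: herm \<sigma>n)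
  fix v :: "complex vec" assume v: "v \<in> carrier_vec n"
  define w where "w = vec n (\<lambda>l. v $ the_inv_into {..<n} \<sigma> l)"
  have w: "w \<in> carrier_vec n" unfolding w_def by simp
  have w\<sigma>: "w $ \<sigma> i = v $ i" if "i < n" for i
    unfolding w_def using that \<sigma>n the_inv_into_f_f[OF bij_betw_imp_inj_on[OF \<sigma>]] by simp
  have "(mat n n (\<lambda>(i,j). X $$ (\<sigma> i, \<sigma> j)) *\<^sub>v v) \<bullet>c v
      = (\<Sum>i<n. (\<Sum>j<n. X $$ (\<sigma> i, \<sigma> j) * w $ \<sigma> j) * cnj (w $ \<sigma> i))"
    using v by (simp add: scalar_prod_def lessThan_atLeast0 w\<sigma>)
  also have "\<dots> = (\<Sum>i<n. (\<Sum>j<n. X $$ (i, j) * w $ j) * cnj (w $ i))"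
    using sum.reindex_bij_betw[OF \<sigma>, of "\<lambda>j. X $$ (_, j) * w $ j"]
      sum.reindex_bij_betw[OF \<sigma>, of "\<lambda>i. (\<Sum>j<n. X $$ (i, j) * w $ j) * cnj (w $ i)"] by simp
  also have "\<dots> = (X *\<^sub>v w) \<bullet>c w"
    using X w by (simp add: scalar_prod_def lessThan_atLeast0)
  finally show "0 \<le> Re ((mat n n (\<lambda>(i,j). X $$ (\<sigma> i, \<sigma> j)) *\<^sub>v v) \<bullet>c v)"
    using psd_nonneg[OF P X w] by simp
qed

definition cyclic_shift :: "nat \<Rightarrow> 'a mat \<Rightarrow> 'a mat" where
  "cyclic_shift k X = mat (dim_row X) (dim_col X)
     (\<lambda>(i,j). X $$ ((i + k) mod dim_row X, (j + k) mod dim_col X))"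

lemma cyclic_shift_carrier [simp]: "X \<in> carrier_mat n m \<Longrightarrow> cyclic_shift k X \<in> carrier_mat n m"
  unfolding cyclic_shift_def by auto

lemma psd_cyclic_shift:
  assumes "psd X" "X \<in> carrier_mat n n" shows "psd (cyclic_shift k X)"
  using psd_permute[OF assms bij_betw_add_mod] assms(2) unfolding cyclic_shift_def by simp

lemma cyclic_shift_minus:
  "X \<in> carrier_mat n m \<Longrightarrow> Y \<in> carrier_mat n m \<Longrightarrow>
   cyclic_shift k (X - Y) = cyclic_shift k X - cyclic_shift k (Y :: 'a :: group_add mat)"
  by (rule eq_matI) (auto simp: cyclic_shift_def)

lemma map_mat_cyclic_shift: "map_mat f (cyclic_shift k X) = cyclic_shift k (map_mat f X)"
  by (rule eq_matI) (auto simp: cyclic_shift_def)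

lemma cyclic_shift_cyclic_shift: "cyclic_shift k (cyclic_shift l X) = cyclic_shift (l + k) X"
  by (rule eq_matI) (auto simp: cyclic_shift_def mod_add_left_eq mod_add_right_eq add_ac)

lemma cyclic_shift_dim: "X \<in> carrier_mat n n \<Longrightarrow> cyclic_shift n X = X"
  by (rule eq_matI) (auto simp: cyclic_shift_def)

lemma cyclic_shift_dsum:
  assumes A: "A \<in> carrier_mat k k" and B: "B \<in> carrier_mat m m"
  shows "cyclic_shift k (dsum A B) = dsum B (A :: 'a :: zero mat)"
proof -
  have shift: "(i + k) mod (k + m) = (if i < m then i + k else i - m)" if "i < k + m" for i
    using that by (auto simp: mod_if)
  show ?thesis
    by (rule eq_matI) (use A B in \<open>auto simp: cyclic_shift_def dsum_def shift\<close>)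
qed

section \<open>Generalised Schur complements\<close>

lemma nonpos_if_le_mult_pos:
  fixes a b :: real
  assumes "\<And>t. 0 < t \<Longrightarrow> b \<le> t * a"
  shows "b \<le> 0"
proof (rule ccontr)
  assume "\<not> b \<le> 0"
  then have "0 < b / (\<bar>a\<bar> + 1)" by simp
  moreover have "b / (\<bar>a\<bar> + 1) * a \<le> b / (\<bar>a\<bar> + 1) * \<bar>a\<bar>"
    using \<open>\<not> b \<le> 0\<close> by (intro mult_left_mono) simp_all
  moreover have "b / (\<bar>a\<bar> + 1) * \<bar>a\<bar> < b" using \<open>\<not> b \<le> 0\<close> by (simp add: field_simps)
  ultimately show False using assms[of "b / (\<bar>a\<bar> + 1)"] by simp
qed

lemma Re_cscalar_prod_four_block_mat_adjoint:
  assumes X: "(X::complex mat) \<in> carrier_mat k k" and C: "C \<in> carrier_mat k m"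
    and Y: "Y \<in> carrier_mat m m" and u: "u \<in> carrier_vec k" and v: "v \<in> carrier_vec m"
  shows "Re ((four_block_mat X C (mat_adjoint C) Y *\<^sub>v (u @\<^sub>v v)) \<bullet>c (u @\<^sub>v v)) =
    Re ((X *\<^sub>v u) \<bullet>c u) + 2 * Re (v \<bullet>c (mat_adjoint C *\<^sub>v u)) + Re ((Y *\<^sub>v v) \<bullet>c v)"
proof -
  have Ca: "mat_adjoint C \<in> carrier_mat m k" using C by simp
  have "(C *\<^sub>v v) \<bullet>c u = v \<bullet>c (mat_adjoint C *\<^sub>v u)" by (rule cscalar_prod_mat_adjoint[OF C v u])
  moreover have "(mat_adjoint C *\<^sub>v u) \<bullet>c v = cnj (v \<bullet>c (mat_adjoint C *\<^sub>v u))"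
    by (rule cscalar_prod_swap) (use Ca u v in simp_all)
  ultimately show ?thesis
    using cscalar_prod_four_block_mat[OF X C Ca Y u v] by simp
qed

lemma cscalar_prod_schur_complement:
  assumes X: "(X::complex mat) \<in> carrier_mat k k" and C: "C \<in> carrier_mat k m"
    and G: "G \<in> carrier_mat m m" and u: "u \<in> carrier_vec k"
  shows "((X - C * G * mat_adjoint C) *\<^sub>v u) \<bullet>c u =
    (X *\<^sub>v u) \<bullet>c u - (G *\<^sub>v (mat_adjoint C *\<^sub>v u)) \<bullet>c (mat_adjoint C *\<^sub>v u)"
proof -
  have Ca: "mat_adjoint C \<in> carrier_mat m k" using C by simp
  have w: "G *\<^sub>v (mat_adjoint C *\<^sub>v u) \<in> carrier_vec m" using G Ca u by simp
  have "(X - C * G * mat_adjoint C) *\<^sub>v u = X *\<^sub>v u - C *\<^sub>v (G *\<^sub>v (mat_adjoint C *\<^sub>v u))"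
    using minus_mult_distrib_mat_vec[OF X mult_carrier_mat[OF mult_carrier_mat[OF C G] Ca] u]
      assoc_mult_mat_vec3[OF C G Ca u] by simp
  then show ?thesis
    using X C u w cscalar_prod_mat_adjoint[OF C w u] by (simp add: cscalar_prod_minus_left[of _ k])
qed

lemma psd_schur_complement:
  assumes X: "(X::complex mat) \<in> carrier_mat k k" and C: "C \<in> carrier_mat k m"
    and Y: "Y \<in> carrier_mat m m" and G: "G \<in> carrier_mat m m"
    and hG: "mat_adjoint G = G" and GYG: "G * Y * G = G"
    and P: "psd (four_block_mat X C (mat_adjoint C) Y)"
  shows "psd (X - C * G * mat_adjoint C)"
proof (rule psdI)
  have Ca: "mat_adjoint C \<in> carrier_mat m k" using C by simp
  have CGC: "C * G * mat_adjoint C \<in> carrier_mat k k" using C G Ca by (metis mult_carrier_mat)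
  show "X - C * G * mat_adjoint C \<in> carrier_mat k k" by (rule minus_carrier_mat[OF CGC])
  have "mat_adjoint X = X" using psd_hermitian[OF psd_four_block_matD(1)[OF X C Ca Y P]] .
  then show "mat_adjoint (X - C * G * mat_adjoint C) = X - C * G * mat_adjoint C"
    using X CGC by (simp add: mat_adjoint_minus mat_adjoint_sandwich[OF C G hG])
  fix u :: "complex vec" assume u: "u \<in> carrier_vec k"
  define z where "z = mat_adjoint C *\<^sub>v u"
  define w where "w = G *\<^sub>v z"
  (* evaluate the block form at (u, - G C^* u) *)
  have z: "z \<in> carrier_vec m" and w: "w \<in> carrier_vec m"
    unfolding z_def w_def using Ca G u by simp_all
  have mw: "(-1) \<cdot>\<^sub>v w \<in> carrier_vec m" using w by simp
  have "G *\<^sub>v (Y *\<^sub>v w) = (G * Y * G) *\<^sub>v z"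
    unfolding w_def using assoc_mult_mat_vec[OF mult_carrier_mat[OF G Y] G z] G Y z by simp
  then have "(Y *\<^sub>v w) \<bullet>c w = w \<bullet>c z"
    using cscalar_prod_mat_adjoint[OF G _ z, of "Y *\<^sub>v w"] Y w GYG hG unfolding w_def by simp
  then have "Re ((four_block_mat X C (mat_adjoint C) Y *\<^sub>v (u @\<^sub>v (-1) \<cdot>\<^sub>v w)) \<bullet>c (u @\<^sub>v (-1) \<cdot>\<^sub>v w))
      = Re ((X *\<^sub>v u) \<bullet>c u) - Re (w \<bullet>c z)"
    using Re_cscalar_prod_four_block_mat_adjoint[OF X C Y u mw] Y w z
    unfolding z_def[symmetric]
    by (simp add: mult_mat_vec[OF Y w] cscalar_prod_smult_left[of
        _ m] cscalar_prod_smult_right[of _ m])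
  moreover have "((X - C * G * mat_adjoint C) *\<^sub>v u) \<bullet>c u = (X *\<^sub>v u) \<bullet>c u - w \<bullet>c z"
    unfolding w_def z_def by (rule cscalar_prod_schur_complement[OF X C G u])
  moreover have "0 \<le> Re ((four_block_mat X C (mat_adjoint C) Y *\<^sub>v (u @\<^sub>v (-1) \<cdot>\<^sub>v w)) \<bullet>c (u @\<^sub>v (-1) \<cdot>\<^sub>v w))"
    using psd_nonneg[OF P _ append_carrier_vec[OF u mw]] X Y by simp
  ultimately show "0 \<le> Re (((X - C * G * mat_adjoint C) *\<^sub>v u) \<bullet>c u)" by simp
qed

lemma psd_four_block_mat_kernel:
  assumes X: "(X::complex mat) \<in> carrier_mat k k" and C: "C \<in> carrier_mat k m"
    and Y: "Y \<in> carrier_mat m m" and P: "psd (four_block_mat X C (mat_adjoint C) Y)"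
    and x: "x \<in> carrier_vec m" and Yx: "Y *\<^sub>v x = 0\<^sub>v m"
  shows "C *\<^sub>v x = 0\<^sub>v k"
proof -
  define c where "c = C *\<^sub>v x"
  (* the form at (-t c, x) is t^2 (X c, c) - 2 t |c|^2, nonnegative for all t > 0 only if c = 0 *)
  have c: "c \<in> carrier_vec k" unfolding c_def using C x by simp
  have Cc: "mat_adjoint C *\<^sub>v c \<in> carrier_vec m" using mat_adjoint_carrier[OF C] c by simp
  have xc: "x \<bullet>c (mat_adjoint C *\<^sub>v c) = c \<bullet>c c"
    using cscalar_prod_mat_adjoint[OF C x c] unfolding c_def by simp
  have "0 \<le> t * (t * Re ((X *\<^sub>v c) \<bullet>c c) - 2 * Re (c \<bullet>c c))" if "0 < t" for t :: real
  proof -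
    have tc: "(- complex_of_real t) \<cdot>\<^sub>v c \<in> carrier_vec k" using c by simp
    have "0 \<le> Re ((four_block_mat X C (mat_adjoint C) Y *\<^sub>v ((- complex_of_real t) \<cdot>\<^sub>v c @\<^sub>v x))
        \<bullet>c ((- complex_of_real t) \<cdot>\<^sub>v c @\<^sub>v x))"
      using psd_nonneg[OF P _ append_carrier_vec[OF tc x]] X Y by simp
    also have "\<dots> = t * (t * Re ((X *\<^sub>v c) \<bullet>c c) - 2 * Re (c \<bullet>c c))"
      using Re_cscalar_prod_four_block_mat_adjoint[OF X C Y tc x] X C c Cc x Yx xc
      by (simp add: mult_mat_vec mult_mat_vec[OF mat_adjoint_carrier[OF
          C] c] cscalar_prod_smult_left[of _ k] cscalar_prod_smult_right[of _ k]
          cscalar_prod_smult_right[of _ m] algebra_simps)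
    finally show ?thesis .
  qed
  then have "2 * Re (c \<bullet>c c) \<le> t * Re ((X *\<^sub>v c) \<bullet>c c)" if "0 < t" for t :: real
    using that by (simp add: zero_le_mult_iff)
  then have "2 * Re (c \<bullet>c c) \<le> 0" by (rule nonpos_if_le_mult_pos)
  then have "c = 0\<^sub>v (dim_vec c)"
    using Re_cscalar_prod_self_nonneg[of c] by (intro cscalar_prod_self_eq_0) simp
  then show ?thesis using C unfolding c_def by auto
qed

lemma psd_four_block_mat_range:
  assumes X: "(X::complex mat) \<in> carrier_mat k k" and C: "C \<in> carrier_mat k m"
    and Y: "Y \<in> carrier_mat m m" and G: "G \<in> carrier_mat m m"
    and hG: "mat_adjoint G = G" and YGY: "Y * G * Y = Y"
    and P: "psd (four_block_mat X C (mat_adjoint C) Y)"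
  shows "Y * G * mat_adjoint C = mat_adjoint C"
proof -
  have Ca: "mat_adjoint C \<in> carrier_mat m k" using C by simp
  have hY: "mat_adjoint Y = Y" using psd_hermitian[OF psd_four_block_matD(2)[OF X C Ca Y P]] .
  have CGY: "C * G * Y = C"
  proof (rule eq_mat_by_mult_mat_vec)
    show "C * G * Y \<in> carrier_mat k m" using C G Y by (metis mult_carrier_mat)
    fix x :: "complex vec" assume x: "x \<in> carrier_vec m"
    have Yx: "Y *\<^sub>v x \<in> carrier_vec m" and GYx: "G *\<^sub>v (Y *\<^sub>v x) \<in> carrier_vec m"
      using G Y x by simp_all
    have "Y *\<^sub>v (G *\<^sub>v (Y *\<^sub>v x)) = (Y * G * Y) *\<^sub>v x"
      using assoc_mult_mat_vec[OF mult_carrier_mat[OF Y G] Y x]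
        assoc_mult_mat_vec[OF Y G Yx] by simp
    then have Yy: "Y *\<^sub>v (x - G *\<^sub>v (Y *\<^sub>v x)) = 0\<^sub>v m"
      using YGY Yx by (simp add: mult_minus_distrib_mat_vec[OF Y x GYx])
    have "C *\<^sub>v (x - G *\<^sub>v (Y *\<^sub>v x)) = 0\<^sub>v k"
      by (rule psd_four_block_mat_kernel[OF X C Y P _ Yy]) (use x GYx in simp)
    then have "C *\<^sub>v x - C *\<^sub>v (G *\<^sub>v (Y *\<^sub>v x)) = 0\<^sub>v k"
      by (simp add: mult_minus_distrib_mat_vec[OF C x GYx])
    then have "C *\<^sub>v x = C *\<^sub>v (G *\<^sub>v (Y *\<^sub>v x))"
      by (rule minus_vec_eq_0D[OF mult_mat_vec_carrier[OF C x] mult_mat_vec_carrier[OF C GYx]])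
    also have "\<dots> = (C * G * Y) *\<^sub>v x"
      using assoc_mult_mat_vec[OF mult_carrier_mat[OF C G] Y x]
        assoc_mult_mat_vec[OF C G Yx] by simp
    finally show "(C * G * Y) *\<^sub>v x = C *\<^sub>v x" by simp
  qed (use C in simp)
  have "mat_adjoint (C * G * Y) = Y * (G * mat_adjoint C)"
    using mat_adjoint_mult[OF mult_carrier_mat[OF C G] Y] mat_adjoint_mult[OF C G] hG hY by simp
  then show ?thesis using CGY assoc_mult_mat[OF Y G Ca] by simp
qed

lemma psd_four_block_mat_if_schur_complement:
  assumes X: "(X::complex mat) \<in> carrier_mat k k" and C: "C \<in> carrier_mat k m"
    and Y: "Y \<in> carrier_mat m m" and G: "G \<in> carrier_mat m m"
    and hG: "mat_adjoint G = G" and YGC: "Y * G * mat_adjoint C = mat_adjoint C"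
    and PY: "psd Y" and PS: "psd (X - C * G * mat_adjoint C)"
  shows "psd (four_block_mat X C (mat_adjoint C) Y)"
proof (rule psdI)
  have Ca: "mat_adjoint C \<in> carrier_mat m k" using C by simp
  have CGC: "C * G * mat_adjoint C \<in> carrier_mat k k" using C G Ca by (metis mult_carrier_mat)
  have hX: "mat_adjoint X = X"
    using hermitian_if_minus_hermitian[OF X CGC psd_hermitian[OF PS]
      mat_adjoint_sandwich[OF C G hG]] .
  show "four_block_mat X C (mat_adjoint C) Y \<in> carrier_mat (k + m) (k + m)" using X Y by simp
  show "mat_adjoint (four_block_mat X C (mat_adjoint C) Y) = four_block_mat X C (mat_adjoint C) Y"
    using mat_adjoint_four_block_mat[OF X C Ca Y] hX psd_hermitian[OF PY] by simp
  fix x :: "complex vec" assume x: "x \<in> carrier_vec (k + m)"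
  define u v where "u = vec_first x k" and "v = vec_last x m"
  have u: "u \<in> carrier_vec k" and v: "v \<in> carrier_vec m" unfolding u_def v_def by auto
  have xuv: "x = u @\<^sub>v v" unfolding u_def v_def using x by simp
  define z where "z = mat_adjoint C *\<^sub>v u"
  define w where "w = G *\<^sub>v z"
  have z: "z \<in> carrier_vec m" and w: "w \<in> carrier_vec m"
    unfolding z_def w_def using Ca G u by simp_all
  have Yw: "Y *\<^sub>v w = z"
    using assoc_mult_mat_vec3[OF Y G Ca u] YGC unfolding w_def z_def by simp
  have "Re (((X - C * G * mat_adjoint C) *\<^sub>v u) \<bullet>c u) = Re ((X *\<^sub>v u) \<bullet>c u) - Re (w \<bullet>c z)"
    unfolding w_def z_def cscalar_prod_schur_complement[OF X C G u] by simp
  moreover have "Re ((Y *\<^sub>v (v + w)) \<bullet>c (v + w)) = Re ((Y *\<^sub>v v) \<bullet>c v) + 2 * Re (v \<bullet>c z) + Re (w \<bullet>c z)"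
  proof -
    have "(Y *\<^sub>v v) \<bullet>c w = v \<bullet>c z"
      using cscalar_prod_mat_adjoint[OF Y v w] psd_hermitian[OF PY] Yw by simp
    moreover have "z \<bullet>c v = cnj (v \<bullet>c z)" by (rule cscalar_prod_swap[OF z v])
    moreover have "z \<bullet>c w = w \<bullet>c z"
      using cscalar_prod_mat_adjoint[OF G z z] hG unfolding w_def by simp
    ultimately show ?thesis
      using Y v w z Yw by (simp add: mult_add_distrib_mat_vec[OF Y v w]
          cscalar_prod_add_left[of _ m] cscalar_prod_add_right[of _ m])
  qed
  moreover have "0 \<le> Re (((X - C * G * mat_adjoint C) *\<^sub>v u) \<bullet>c u)"
    using psd_nonneg[OF PS minus_carrier_mat[OF CGC] u] .
  moreover have "0 \<le> Re ((Y *\<^sub>v (v + w)) \<bullet>c (v + w))"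
    using psd_nonneg[OF PY Y] v w by simp
  ultimately show "0 \<le> Re ((four_block_mat X C (mat_adjoint C) Y *\<^sub>v x) \<bullet>c x)"
    unfolding xuv Re_cscalar_prod_four_block_mat_adjoint[OF X C Y u v] z_def[symmetric] by simp
qed

section \<open>The Moore--Penrose pseudoinverse of a Hermitian matrix\<close>

definition outer_prod :: "complex vec \<Rightarrow> complex vec \<Rightarrow> complex mat" where
  "outer_prod u w = mat (dim_vec u) (dim_vec w) (\<lambda>(i,j). u $ i * cnj (w $ j))"

lemma outer_prod_carrier [simp]:
  "u \<in> carrier_vec n \<Longrightarrow> w \<in> carrier_vec m \<Longrightarrow> outer_prod u w \<in> carrier_mat n m"
  unfolding outer_prod_def by auto

lemma dim_outer_prod [simp]:
  "dim_row (outer_prod u w) = dim_vec u" "dim_col (outer_prod u w) = dim_vec w"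
  unfolding outer_prod_def by simp_all

lemma mat_adjoint_outer_prod: "mat_adjoint (outer_prod u w) = outer_prod w u"
  by (rule eq_matI) (auto simp: outer_prod_def)

lemma mult_outer_prod:
  "A \<in> carrier_mat n m \<Longrightarrow> d \<in> carrier_vec m \<Longrightarrow> A * outer_prod d w = outer_prod (A *\<^sub>v d) w"
  by (rule eq_matI) (auto simp: outer_prod_def scalar_prod_def sum_distrib_right mult.assoc)

lemma outer_prod_mult_mat_vec:
  "x \<in> carrier_vec m \<Longrightarrow> w \<in> carrier_vec m \<Longrightarrow> outer_prod u w *\<^sub>v x = (x \<bullet>c w) \<cdot>\<^sub>v u"
  by (rule eq_vecI) (auto simp: outer_prod_def scalar_prod_def sum_distrib_left mult_ac)

lemma projector_add_rank_one:
  assumes Q: "Q \<in> carrier_mat n n" and hQ: "mat_adjoint Q = Q" and QQ: "Q * Q = Q"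
    and c: "c \<in> carrier_vec n" "c \<noteq> 0\<^sub>v n" and Qc: "Q *\<^sub>v c = 0\<^sub>v n"
  defines "Q' \<equiv> Q + complex_of_real (1 / Re (c \<bullet>c c)) \<cdot>\<^sub>m outer_prod c c"
  shows "Q' \<in> carrier_mat n n" "mat_adjoint Q' = Q'" "Q' * Q' = Q'" "Q' *\<^sub>v c = c"
    and "\<And>x. x \<in> carrier_vec n \<Longrightarrow> Q *\<^sub>v x = x \<Longrightarrow> Q' *\<^sub>v x = x"
proof -
  define s where "s = complex_of_real (1 / Re (c \<bullet>c c))"
  have "c \<bullet>c c = complex_of_real (Re (c \<bullet>c c))" unfolding cscalar_prod_self by simp
  moreover have "Re (c \<bullet>c c) \<noteq> 0" using c cscalar_prod_self_eq_0[of c] by auto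
  ultimately have s: "s * (c \<bullet>c c) = 1" unfolding s_def
    by (metis divide_self_if of_real_1 of_real_divide times_divide_eq_left mult_1)
  have O: "outer_prod c c \<in> carrier_mat n n" using c by simp
  show Q': "Q' \<in> carrier_mat n n" unfolding Q'_def using Q O by simp
  have app: "Q' *\<^sub>v x = Q *\<^sub>v x + (s * (x \<bullet>c c)) \<cdot>\<^sub>v c" if x: "x \<in> carrier_vec n" for x
    unfolding Q'_def s_def[symmetric] using Q O c x
    by (simp add: add_mult_distrib_mat_vec[of Q n n] smult_mult_mat_vec outer_prod_mult_mat_vec
        smult_smult_assoc)
  show "mat_adjoint Q' = Q'"
    unfolding Q'_def using Q O hQ
    by (simp add: mat_adjoint_add mat_adjoint_smult mat_adjoint_outer_prod)
  have orth: "(Q *\<^sub>v x) \<bullet>c c = 0" if "x \<in> carrier_vec n" for x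
    using cscalar_prod_mat_adjoint[OF Q that c(1)] hQ Qc that by simp
  have range: "Q' *\<^sub>v (Q *\<^sub>v x) = Q *\<^sub>v x" if x: "x \<in> carrier_vec n" for x
    using app[of "Q *\<^sub>v x"] orth[OF x] Q x c QQ assoc_mult_mat_vec[OF Q Q x] by simp
  then show "Q' *\<^sub>v x = x" if "x \<in> carrier_vec n" "Q *\<^sub>v x = x" for x
    using that by metis
  show Q'c: "Q' *\<^sub>v c = c" using app[OF c(1)] Qc s c by simp
  show "Q' * Q' = Q'"
  proof (rule eq_mat_by_mult_mat_vec)
    show "Q' * Q' \<in> carrier_mat n n" using Q' by simp
    fix x :: "complex vec" assume x: "x \<in> carrier_vec n"
    show "(Q' * Q') *\<^sub>v x = Q' *\<^sub>v x"
      using app[OF x] range[OF x] Q'c Q' Q x c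
      by (simp add: mult_add_distrib_mat_vec[OF Q'] mult_mat_vec[OF Q'])
  qed (use Q' in simp)
qed

(* Q is an orthogonal projector onto a subspace of the range of Y (witnessed by Y * T = Q)
   containing the first j columns of Y; a Gram-Schmidt step adds the next column. *)
definition partial_range_projector :: "complex mat \<Rightarrow> nat \<Rightarrow> complex mat \<Rightarrow> complex mat \<Rightarrow> bool" where
  "partial_range_projector Y j Q T \<longleftrightarrow>
     Q \<in> carrier_mat (dim_row Y) (dim_row Y) \<and> T \<in> carrier_mat (dim_col Y) (dim_row Y) \<and>
     mat_adjoint Q = Q \<and> Q * Q = Q \<and> Y * T = Q \<and> (\<forall>i<j. Q *\<^sub>v col Y i = col Y i)"

lemma partial_range_projector_Suc:
  assumes PR: "partial_range_projector Y j Q T" and j: "j < dim_col Y"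
  shows "\<exists>Q' T'. partial_range_projector Y (Suc j) Q' T'"
proof -
  define n m where "n = dim_row Y" and "m = dim_col Y"
  have Y: "Y \<in> carrier_mat n m" unfolding n_def m_def by simp
  have Q: "Q \<in> carrier_mat n n" and T: "T \<in> carrier_mat m n" and hQ: "mat_adjoint Q = Q"
    and QQ: "Q * Q = Q" and YT: "Y * T = Q" and cols: "\<And>i. i < j \<Longrightarrow> Q *\<^sub>v col Y i = col Y i"
    using PR unfolding partial_range_projector_def n_def m_def by auto
  define c where "c = col Y j"
  define c' where "c' = c - Q *\<^sub>v c"
  have c: "c \<in> carrier_vec n" unfolding c_def n_def by simp
  have Qc: "Q *\<^sub>v c \<in> carrier_vec n" and QQc: "Q *\<^sub>v (Q *\<^sub>v c) = Q *\<^sub>v c"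
    using Q c QQ assoc_mult_mat_vec[OF Q Q c] by simp_all
  have c': "c' \<in> carrier_vec n" unfolding c'_def using c Qc by simp
  have Qc': "Q *\<^sub>v c' = 0\<^sub>v n" unfolding c'_def using QQc Qc
    by (simp add: mult_minus_distrib_mat_vec[OF Q c Qc])
  have c_split: "c' + Q *\<^sub>v c = c" unfolding c'_def using minus_add_cancel_vec[OF c Qc] .
  show ?thesis
  proof (cases "c' = 0\<^sub>v n")
    case True
    then have "Q *\<^sub>v col Y j = col Y j" using c_split Qc unfolding c_def by simp
    then have "partial_range_projector Y (Suc j) Q T"
      using PR cols unfolding partial_range_projector_def by (auto simp: less_Suc_eq)
    then show ?thesis by blast
  next
    case False
    define s where "s = complex_of_real (1 / Re (c' \<bullet>c c'))"
    define Q' where "Q' = Q + s \<cdot>\<^sub>m outer_prod c' c'"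
    note Q' = projector_add_rank_one[OF Q hQ QQ c' False Qc', folded s_def Q'_def]
    define d where "d = unit_vec m j - T *\<^sub>v c"
    define T' where "T' = T + s \<cdot>\<^sub>m outer_prod d c'"
    have d: "d \<in> carrier_vec m" unfolding d_def using T c by simp
    have T': "T' \<in> carrier_mat m n" unfolding T'_def using T d c' by simp
    have "Y *\<^sub>v unit_vec m j = c" unfolding c_def
      by (rule mult_mat_vec_unit_vec[OF Y j[folded m_def]])
    moreover have "Y *\<^sub>v (T *\<^sub>v c) = Q *\<^sub>v c" using assoc_mult_mat_vec[OF Y T c] YT by simp
    ultimately have "Y *\<^sub>v d = c'"
      unfolding d_def c'_def
      using mult_minus_distrib_mat_vec[OF Y _ mult_mat_vec_carrier[OF T c]] by simp
    then have YT': "Y * T' = Q'"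
      unfolding T'_def Q'_def using Y T d c' YT
      by (simp add: mult_add_distrib_mat[OF Y T] mult_smult_distrib[OF
          Y outer_prod_carrier[OF d c']]
          mult_outer_prod[OF Y d])
    have "Q' *\<^sub>v c = c"
      using c_split Q'(4) Q'(5)[OF Qc QQc] mult_add_distrib_mat_vec[OF Q'(1) c' Qc] by simp
    then have "Q' *\<^sub>v col Y i = col Y i" if "i < Suc j" for i
      using that Q'(5)[OF _ cols, of i] unfolding c_def n_def by (cases "i = j") auto
    then have "partial_range_projector Y (Suc j) Q' T'"
      unfolding partial_range_projector_def using Q' T' YT' n_def m_def by auto
    then show ?thesis by blast
  qed
qed

lemma range_projector_exists:
  assumes Y: "(Y::complex mat) \<in> carrier_mat n m"
  shows "\<exists>Q T. Q \<in> carrier_mat n n \<and> T \<in> carrier_mat m n \<and> mat_adjoint Q = Q \<and> Q * Q = Q \<and>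
    Y * T = Q \<and> Q * Y = Y"
proof -
  have ex: "\<exists>Q T. partial_range_projector Y j Q T" if "j \<le> dim_col Y" for j
    using that
  proof (induction j)
    case 0
    have "partial_range_projector Y 0 (0\<^sub>m (dim_row Y) (dim_row Y)) (0\<^sub>m (dim_col Y) (dim_row Y))"
      unfolding partial_range_projector_def by auto
    then show ?case by blast
  next
    case (Suc j)
    then show ?case using partial_range_projector_Suc by (meson Suc_leD Suc_le_lessD)
  qed
  obtain Q T where PR: "partial_range_projector Y m Q T" using ex[of m] Y by auto
  then have Q: "Q \<in> carrier_mat n n" and cols: "\<And>i. i < m \<Longrightarrow> Q *\<^sub>v col Y i = col Y i"
    using Y unfolding partial_range_projector_def by auto
  have "Q * Y = Y"
  proof (rule eq_matI)
    fix i j assume "i < dim_row Y" "j < dim_col Y"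
    moreover from this have "(Q * Y) $$ (i,j) = (Q *\<^sub>v col Y j) $ i" using Q Y by simp
    ultimately show "(Q * Y) $$ (i,j) = Y $$ (i,j)" using Y cols[of j] by simp
  qed (use Q Y in auto)
  then show ?thesis using PR Y unfolding partial_range_projector_def by auto
qed

definition penrose_conditions :: "complex mat \<Rightarrow> complex mat \<Rightarrow> bool" where
  "penrose_conditions M X \<longleftrightarrow> X \<in> carrier_mat (dim_col M) (dim_row M) \<and>
     M * X * M = M \<and> X * M * X = X \<and> mat_adjoint (M * X) = M * X \<and> mat_adjoint (X * M) = X * M"

lemma penrose_conditions_unique:
  assumes Y: "(Y::complex mat) \<in> carrier_mat n m"
    and P1: "penrose_conditions Y X1" and P2: "penrose_conditions Y X2"
  shows "X1 = X2"
proof -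
  have X1: "X1 \<in> carrier_mat m n" and a1: "Y * X1 * Y = Y" and b1: "X1 * Y * X1 = X1"
    and c1: "mat_adjoint (Y * X1) = Y * X1" and d1: "mat_adjoint (X1 * Y) = X1 * Y"
    using P1 Y unfolding penrose_conditions_def by auto
  have X2: "X2 \<in> carrier_mat m n" and a2: "Y * X2 * Y = Y" and b2: "X2 * Y * X2 = X2"
    and c2: "mat_adjoint (Y * X2) = Y * X2" and d2: "mat_adjoint (X2 * Y) = X2 * Y"
    using P2 Y unfolding penrose_conditions_def by auto
  have YX1: "Y * X1 \<in> carrier_mat n n" and YX2: "Y * X2 \<in> carrier_mat n n"
    and X1Y: "X1 * Y \<in> carrier_mat m m" and X2Y: "X2 * Y \<in> carrier_mat m m" using X1 X2 Y by auto
  have "Y * X1 = (Y * X2) * (Y * X1)" using a2 assoc_mult_mat[OF YX2 Y X1] by simp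
  then have "Y * X1 = mat_adjoint (Y * X1) * mat_adjoint (Y * X2)"
    using c1 mat_adjoint_mult[OF YX2 YX1] by metis
  also have "\<dots> = Y * X2"
    using c1 c2 a1 assoc_mult_mat[OF YX1 Y X2] by simp
  finally have E: "Y * X1 = Y * X2" .
  have "X1 * Y = (X1 * Y) * (X2 * Y)"
    using a2 assoc_mult_mat[OF X1 Y X2Y] assoc_mult_mat[OF Y X2 Y] by simp
  then have "X1 * Y = mat_adjoint (X2 * Y) * mat_adjoint (X1 * Y)"
    using d1 mat_adjoint_mult[OF X1Y X2Y] by metis
  also have "\<dots> = X2 * Y"
    using d1 d2 a1 assoc_mult_mat[OF X2 Y X1Y] assoc_mult_mat[OF Y X1 Y] by simp
  finally have F: "X1 * Y = X2 * Y" .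
  have "X1 = X2 * Y * X1" using b1 F by simp
  also have "\<dots> = X2 * (Y * X2)" using E assoc_mult_mat[OF X2 Y X1] by simp
  also have "\<dots> = X2" using b2 assoc_mult_mat[OF X2 Y X2] by simp
  finally show ?thesis .
qed

lemma penrose_conditions_exists_hermitian:
  assumes Y: "(Y::complex mat) \<in> carrier_mat n n" and hY: "mat_adjoint Y = Y"
  shows "\<exists>X. penrose_conditions Y X"
proof -
  obtain Q T where Q: "Q \<in> carrier_mat n n" and T: "T \<in> carrier_mat n n" and hQ: "mat_adjoint Q = Q"
    and QQ: "Q * Q = Q" and YT: "Y * T = Q" and QY: "Q * Y = Y"
    using range_projector_exists[OF Y] by blast
  have Ta: "mat_adjoint T \<in> carrier_mat n n" using T by simp
  have YQ: "Y * Q = Y" using mat_adjoint_mult[OF Q Y] QY hY hQ by simp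
  have TY: "mat_adjoint T * Y = Q" using mat_adjoint_mult[OF Y T] YT hY hQ by simp
  have QT: "Q * T = mat_adjoint T * Q"
    using YT TY assoc_mult_mat[OF Ta Y T] by simp
  have "Y * (Q * T) = Q" using assoc_mult_mat[OF Y Q T] YQ YT by simp
  moreover have "Q * T * Y = Q" unfolding QT using assoc_mult_mat[OF Ta Q Y] QY TY by simp
  ultimately have "penrose_conditions Y (Q * T)"
    unfolding penrose_conditions_def using Q T Y QY hQ QQ assoc_mult_mat[OF Q Q T] by auto
  then show ?thesis by blast
qed

lemma pinv_hermitian:
  assumes Y: "(Y::complex mat) \<in> carrier_mat n n" and hY: "mat_adjoint Y = Y"
  shows "pinv Y \<in> carrier_mat n n" "Y * pinv Y * Y = Y" "pinv Y * Y * pinv Y = pinv Y"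
    "mat_adjoint (pinv Y) = pinv Y"
proof -
  have P: "penrose_conditions Y (pinv Y)"
    unfolding pinv_def penrose_conditions_def[symmetric]
    using theI'[of "penrose_conditions Y"] penrose_conditions_exists_hermitian[OF Y hY]
      penrose_conditions_unique[OF Y] by blast
  then show X: "pinv Y \<in> carrier_mat n n" "Y * pinv Y * Y = Y" "pinv Y * Y * pinv Y = pinv Y"
    using Y unfolding penrose_conditions_def by auto
  define X where "X = pinv Y"
  have Xc: "X \<in> carrier_mat n n" and Xa: "mat_adjoint X \<in> carrier_mat n n"
    using X(1) unfolding X_def by simp_all
  have adj3: "mat_adjoint (A * B * D) = mat_adjoint D * mat_adjoint B * mat_adjoint A"
    if "A \<in> carrier_mat n n" "B \<in> carrier_mat n n" "D \<in> carrier_mat n n" for A B D :: "complex mat"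
    using that by (simp add: mat_adjoint_mult[of _ n n _ n] assoc_mult_mat[of _ n n _ n _ n])
  have YXa: "Y * mat_adjoint X = X * Y" and XaY: "mat_adjoint X * Y = Y * X"
    using P mat_adjoint_mult[OF Xc Y] mat_adjoint_mult[OF Y Xc] hY
    unfolding penrose_conditions_def X_def by auto
  have "penrose_conditions Y (mat_adjoint X)"
    using P adj3[OF Y Xc Y] adj3[OF Xc Y Xc] YXa XaY Xa Y hY
    unfolding penrose_conditions_def X_def by auto
  then show "mat_adjoint (pinv Y) = pinv Y"
    using penrose_conditions_unique[OF Y _ P] unfolding X_def by blast
qed

lemma psd_minus_schur_complement_iff:
  assumes X: "(X::complex mat) \<in> carrier_mat k k" and C: "C \<in> carrier_mat k m"
    and Y: "Y \<in> carrier_mat m m" and R: "R \<in> carrier_mat k k" and R0: "R0 \<in> carrier_mat k k"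
    and P0: "psd (four_block_mat (X - R0) C (mat_adjoint C) Y)"
  shows "psd (X - C * pinv Y * mat_adjoint C - R) \<longleftrightarrow> psd (four_block_mat (X - R) C (mat_adjoint C) Y)"
proof -
  have Ca: "mat_adjoint C \<in> carrier_mat m k" using C by simp
  have XR0: "X - R0 \<in> carrier_mat k k" and XR: "X - R \<in> carrier_mat k k"
    using minus_carrier_mat[OF R0] minus_carrier_mat[OF R] by simp_all
  have PY: "psd Y" by (rule psd_four_block_matD(2)[OF XR0 C Ca Y P0])
  note G = pinv_hermitian[OF Y psd_hermitian[OF PY]]
  have CGC: "C * pinv Y * mat_adjoint C \<in> carrier_mat k k" using C G(1) Ca
    by (metis mult_carrier_mat)
  have "Y * pinv Y * mat_adjoint C = mat_adjoint C"
    by (rule psd_four_block_mat_range[OF XR0 C Y G(1) G(4) G(2) P0])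
  then show ?thesis
    unfolding minus_minus_mat_commute[OF X CGC R]
    using psd_schur_complement[OF XR C Y G(1) G(4) G(3)]
      psd_four_block_mat_if_schur_complement[OF XR C Y G(1) G(4) _ PY] by blast
qed

lemma psd_minus_dsum_iff_schur_complement:
  assumes X: "(X::complex mat) \<in> carrier_mat k k" and C: "C \<in> carrier_mat k m"
    and Y: "Y \<in> carrier_mat m m" and Q: "Q \<in> carrier_mat m m"
    and R: "R \<in> carrier_mat k k" and R0: "R0 \<in> carrier_mat k k"
    and P0: "psd (four_block_mat X C (mat_adjoint C) Y - dsum R0 Q)"
  shows "psd (four_block_mat X C (mat_adjoint C) Y - dsum R Q) \<longleftrightarrow>
    psd (X - C * pinv (Y - Q) * mat_adjoint C - R)"
proof -
  have YQ: "Y - Q \<in> carrier_mat m m" using minus_carrier_mat[OF Q] .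
  have split: "four_block_mat X C (mat_adjoint C) Y - dsum S Q =
      four_block_mat (X - S) C (mat_adjoint C) (Y - Q)"
    if "S \<in> carrier_mat k k" for S
    using four_block_mat_minus_dsum[OF X C mat_adjoint_carrier[OF C] Y that Q] .
  show ?thesis
    using psd_minus_schur_complement_iff[OF X C YQ R R0] P0 unfolding split[OF R]
      split[OF R0] by blast
qed

section \<open>One-mode covariance matrices\<close>

lemma det_1x1: "(A :: 'a :: comm_ring_1 mat) \<in> carrier_mat 1 1 \<Longrightarrow> det A = A $$ (0,0)"
  by (simp add: laplace_expansion_column[of A 1 0] cofactor_def mat_delete_def det_dim_zero)

lemma det_2x2:
  assumes A: "(A :: 'a :: comm_ring_1 mat) \<in> carrier_mat 2 2"
  shows "det A = A $$ (0,0) * A $$ (1,1) - A $$ (0,1) * A $$ (1,0)"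
proof -
  have "det A = A $$ (0,0) * cofactor A 0 0 + A $$ (1,0) * cofactor A 1 0"
    using laplace_expansion_column[OF A, of 0] by (simp add: numeral_2_eq_2)
  moreover have "cofactor A 0 0 = A $$ (1,1)" "cofactor A 1 0 = - A $$ (0,1)"
    unfolding cofactor_def using A
    by (subst det_1x1; auto simp: mat_delete_def delete_index_def insert_index_def)+
  ultimately show ?thesis by (simp add: algebra_simps)
qed

lemma sum_upt_2: "(\<Sum>i = 0..<(2::nat). f i) = f 0 + (f 1 :: 'a :: comm_monoid_add)"
  by (simp add: numeral_2_eq_2)

lemma Re_cscalar_prod_hermitian_2x2:
  assumes H: "(H::complex mat) \<in> carrier_mat 2 2" and hH: "mat_adjoint H = H" and v: "v \<in> carrier_vec 2"
  shows "Re ((H *\<^sub>v v) \<bullet>c v) = Re (H $$ (0,0)) * (cmod (v $ 0))\<^sup>2 + Re (H $$ (1,1)) * (cmod (v $ 1))\<^sup>2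
     + 2 * Re (H $$ (0,1) * v $ 1 * cnj (v $ 0))"
proof -
  note herm = hermitian_index[OF hH H]
  have diag: "H $$ (i,i) = complex_of_real (Re (H $$ (i,i)))" if "i < 2" for i
    using herm[OF that that] by (simp add: complex_eq_iff)
  have norm: "v $ i * cnj (v $ i) = complex_of_real ((cmod (v $ i))\<^sup>2)" for i
    by (simp only: complex_norm_square)
  have off: "H $$ (1,0) * v $ 0 * cnj (v $ 1) = cnj (H $$ (0,1) * v $ 1 * cnj (v $ 0))"
    using herm[of 1 0] by simp
  have "(H *\<^sub>v v) \<bullet>c v = H $$ (0,0) * (v $ 0 * cnj (v $ 0)) + H $$ (0,1) * v $ 1 * cnj (v $ 0)
     + H $$ (1,0) * v $ 0 * cnj (v $ 1) + H $$ (1,1) * (v $ 1 * cnj (v $ 1))"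
    using H v by (simp add: scalar_prod_def sum_upt_2 algebra_simps)
  also have "\<dots> = complex_of_real (Re (H $$ (0,0)) * (cmod (v $ 0))\<^sup>2) + H $$ (0,1) * v $ 1 * cnj (v $ 0)
     + cnj (H $$ (0,1) * v $ 1 * cnj (v $ 0)) + complex_of_real (Re (H $$ (1,1)) * (cmod (v $ 1))\<^sup>2)"
    by (subst diag, simp, subst diag, simp, subst norm, subst norm, subst off) simp
  finally show ?thesis by (simp add: algebra_simps)
qed

lemma two_mult_le_of_sq_le_mult:
  fixes a d b p q :: real
  assumes "0 \<le> a" "0 \<le> d" "b\<^sup>2 \<le> a * d" "0 \<le> p" "0 \<le> q"
  shows "2 * b * p * q \<le> a * p\<^sup>2 + d * q\<^sup>2"
proof -
  have b: "b \<le> sqrt a * sqrt d"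
    using assms(3) by (metis abs_ge_self order_trans real_sqrt_abs real_sqrt_le_mono real_sqrt_mult)
  have "2 * b * p * q \<le> 2 * (sqrt a * p) * (sqrt d * q)"
    using mult_right_mono[OF b, of "2 * p * q"] assms(4,5) by (simp add: mult_ac)
  also have "\<dots> \<le> (sqrt a * p)\<^sup>2 + (sqrt d * q)\<^sup>2"
    using sum_squares_bound by blast
  also have "\<dots> = a * p\<^sup>2 + d * q\<^sup>2"
    using assms(1,2) by (simp add: power_mult_distrib)
  finally show ?thesis .
qed

lemma hermitian_2x2_psdI:
  assumes H: "(H::complex mat) \<in> carrier_mat 2 2" and hH: "mat_adjoint H = H"
    and a: "0 \<le> Re (H $$ (0,0))" and d: "0 \<le> Re (H $$ (1,1))"
    and b: "(cmod (H $$ (0,1)))\<^sup>2 \<le> Re (H $$ (0,0)) * Re (H $$ (1,1))"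
  shows "psd H"
proof (rule psdI[OF H hH])
  fix v :: "complex vec" assume v: "v \<in> carrier_vec 2"
  let ?b = "H $$ (0,1)"
  have "- Re (?b * v $ 1 * cnj (v $ 0)) \<le> cmod ?b * cmod (v $ 1) * cmod (v $ 0)"
    using abs_Re_le_cmod[of "?b * v $ 1 * cnj (v $ 0)"] by (simp add: norm_mult)
  moreover have "2 * cmod ?b * cmod (v $ 0) * cmod (v $ 1) \<le>
      Re (H $$ (0,0)) * (cmod (v $ 0))\<^sup>2 + Re (H $$ (1,1)) * (cmod (v $ 1))\<^sup>2"
    using a d b by (intro two_mult_le_of_sq_le_mult) simp_all
  ultimately show "0 \<le> Re ((H *\<^sub>v v) \<bullet>c v)"
    unfolding Re_cscalar_prod_hermitian_2x2[OF H hH v] by (simp add: mult_ac)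
qed

lemma psd_hermitian_2x2_iff:
  assumes H: "(H::complex mat) \<in> carrier_mat 2 2" and hH: "mat_adjoint H = H"
  shows "psd H \<longleftrightarrow> 0 \<le> Re (H $$ (0,0)) \<and> 0 \<le> Re (H $$ (1,1)) \<and>
    (cmod (H $$ (0,1)))\<^sup>2 \<le> Re (H $$ (0,0)) * Re (H $$ (1,1))"
    (is "_ \<longleftrightarrow> 0 \<le> ?a \<and> 0 \<le> ?d \<and> (cmod ?b)\<^sup>2 \<le> ?a * ?d")
proof
  assume P: "psd H"
  have pos: "0 \<le> ?a * (cmod (v $ 0))\<^sup>2 + ?d * (cmod (v $ 1))\<^sup>2 + 2 * Re (?b * v $ 1 * cnj (v $ 0))"
    if "v \<in> carrier_vec 2" for v
    using psd_nonneg[OF P H that] Re_cscalar_prod_hermitian_2x2[OF H hH that] by simp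
  show "0 \<le> ?a \<and> 0 \<le> ?d \<and> (cmod ?b)\<^sup>2 \<le> ?a * ?d"
  proof (intro conjI)
    show a: "0 \<le> ?a" using pos[of "vec 2 (\<lambda>i. if i = 0 then 1 else 0)"] by simp
    show "0 \<le> ?d" using pos[of "vec 2 (\<lambda>i. if i = 0 then 0 else 1)"] by simp
    (* test H against the vector (- t H01, 1) and optimise over t *)
    have lin: "2 * t * (cmod ?b)\<^sup>2 \<le> ?a * t\<^sup>2 * (cmod ?b)\<^sup>2 + ?d" if "0 \<le> t" for t
    proof -
      define v where "v = vec 2 (\<lambda>i. if i = 0 then - complex_of_real t * ?b else 1)"
      have "Re (?b * v $ 1 * cnj (v $ 0)) = - t * (cmod ?b)\<^sup>2"
        unfolding v_def cmod_power2 by (simp add: power2_eq_square algebra_simps)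
      moreover have "(cmod (v $ 0))\<^sup>2 = t\<^sup>2 * (cmod ?b)\<^sup>2" "(cmod (v $ 1))\<^sup>2 = 1"
        unfolding v_def using that by (simp_all add: norm_mult power_mult_distrib)
      moreover have "v \<in> carrier_vec 2" unfolding v_def by simp
      ultimately show ?thesis using pos[of v] by (simp add: mult_ac)
    qed
    show "(cmod ?b)\<^sup>2 \<le> ?a * ?d"
    proof (cases "?a = 0")
      case True
      then show ?thesis using lin[of "(?d + 1) / (2 * (cmod ?b)\<^sup>2)"] lin[of 0]
        by (cases "?b = 0") (simp_all add: field_simps)
    next
      case False
      then show ?thesis using lin[of "1 / ?a"] a by (simp add: power2_eq_square field_simps)
    qed
  qed
next
  assume "0 \<le> ?a \<and> 0 \<le> ?d \<and> (cmod ?b)\<^sup>2 \<le> ?a * ?d"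
  then show "psd H" using hermitian_2x2_psdI[OF H hH] by simp
qed

lemma dim_Jmodes [simp]: "dim_row (Jmodes n S) = 2 * n" "dim_col (Jmodes n S) = 2 * n"
  by (simp_all add: Jmodes_def)

lemma Jmodes_carrier [simp]: "k = 2 * n \<Longrightarrow> Jmodes n S \<in> carrier_mat k k"
  by (simp add: carrier_matI)

lemma mat_adjoint_smult_Jmodes:
  assumes "cnj c = - c" shows "mat_adjoint (c \<cdot>\<^sub>m Jmodes n S) = c \<cdot>\<^sub>m Jmodes n S"
proof (rule eq_matI)
  fix i j assume "i < dim_row (c \<cdot>\<^sub>m Jmodes n S)" "j < dim_col (c \<cdot>\<^sub>m Jmodes n S)"
  then have "i < 2 * n" "j < 2 * n" by simp_all
  moreover have "i mod 2 = 0 \<or> i mod 2 = 1" "j mod 2 = 0 \<or> j mod 2 = 1" by auto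
  ultimately show "mat_adjoint (c \<cdot>\<^sub>m Jmodes n S) $$ (i, j) = (c \<cdot>\<^sub>m Jmodes n S) $$ (i, j)"
    using assms by (auto simp: Jmodes_def)
qed simp_all

lemma map_cnj_smult_Jmodes [simp]: "map_mat cnj (c \<cdot>\<^sub>m Jmodes n S) = cnj c \<cdot>\<^sub>m Jmodes n S"
  by (rule eq_matI) (auto simp: Jmodes_def)

abbreviation J1 :: "complex mat" where "J1 \<equiv> Jmodes 1 {}"

lemma J1_carrier: "J1 \<in> carrier_mat 2 2"
  by simp

(* Both spellings of the index 1 are needed: the simplifier may present it as Suc 0. *)
lemma J1_index [simp]:
  "J1 $$ (0,0) = 0" "J1 $$ (0,1) = -1" "J1 $$ (1,0) = 1" "J1 $$ (1,1) = 0"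
  "Jmodes (Suc 0) {} $$ (0,0) = 0" "Jmodes (Suc 0) {} $$ (0,Suc 0) = -1"
  "Jmodes (Suc 0) {} $$ (Suc 0,0) = 1" "Jmodes (Suc 0) {} $$ (Suc 0,Suc 0) = 0"
  by (simp_all add: Jmodes_def)

definition sym_mat2 :: "real \<Rightarrow> real \<Rightarrow> real \<Rightarrow> real mat" where
  "sym_mat2 p q r =
     mat 2 2 (\<lambda>(i,j). if i = 0 then (if j = 0 then p else q) else (if j = 0 then q else r))"

lemma sym_mat2_carrier [simp]: "sym_mat2 p q r \<in> carrier_mat 2 2"
  by (simp add: sym_mat2_def)

lemma dim_sym_mat2 [simp]: "dim_row (sym_mat2 p q r) = 2" "dim_col (sym_mat2 p q r) = 2"
  by (simp_all add: sym_mat2_def)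

lemma sym_mat2_index [simp]:
  "sym_mat2 p q r $$ (0,0) = p" "sym_mat2 p q r $$ (0,1) = q"
  "sym_mat2 p q r $$ (1,0) = q" "sym_mat2 p q r $$ (1,1) = r"
  "sym_mat2 p q r $$ (0,Suc 0) = q" "sym_mat2 p q r $$ (Suc 0,0) = q"
  "sym_mat2 p q r $$ (Suc 0,Suc 0) = r"
  by (simp_all add: sym_mat2_def)

lemma transpose_sym_mat2 [simp]: "transpose_mat (sym_mat2 p q r) = sym_mat2 p q r"
  by (rule eq_matI) (auto simp: sym_mat2_def)

lemma det_sym_mat2: "det (sym_mat2 p q r) = p * r - q\<^sup>2"
  by (simp add: det_2x2 power2_eq_square)

lemma real_pd_sym_mat2:
  assumes p: "0 < p" and D: "0 < p * r - q\<^sup>2"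
  shows "real_pd (sym_mat2 p q r)"
  unfolding real_pd_def
proof (intro conjI ballI impI)
  fix z :: "real vec"
  assume "z \<in> carrier_vec (dim_row (sym_mat2 p q r))" "z \<noteq> 0\<^sub>v (dim_row (sym_mat2 p q r))"
  then have z: "z \<in> carrier_vec 2" and nz: "z $ 0 \<noteq> 0 \<or> z $ 1 \<noteq> 0"
    by (auto intro!: eq_vecI simp: less_2_cases_iff)
  have "p * (z \<bullet> (sym_mat2 p q r *\<^sub>v z)) = (p * z $ 0 + q * z $ 1)\<^sup>2 + (p * r - q\<^sup>2) * (z $ 1)\<^sup>2"
    using z by (simp add: scalar_prod_def sum_upt_2 sym_mat2_def power2_eq_square algebra_simps)
  also have "\<dots> > 0"
    using nz p D by (cases "z $ 1 = 0") (auto intro: add_nonneg_pos)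
  finally show "0 < z \<bullet> (sym_mat2 p q r *\<^sub>v z)" using p by (simp add: zero_less_mult_iff)
qed simp

lemma is_CM_1_sym_mat2:
  assumes p: "0 < p" and pr: "q\<^sup>2 + 1 \<le> p * r"
  shows "is_CM 1 (sym_mat2 p q r)"
  unfolding is_CM_def loewner_ge_def
proof (intro conjI)
  show "real_pd (sym_mat2 p q r)" using p pr by (intro real_pd_sym_mat2) simp_all
  have iJ: "\<i> \<cdot>\<^sub>m J1 \<in> carrier_mat 2 2" by simp
  have C: "cmat (sym_mat2 p q r) - \<i> \<cdot>\<^sub>m J1 \<in> carrier_mat 2 2" by (rule minus_carrier_mat[OF iJ])
  have "mat_adjoint (cmat (sym_mat2 p q r) - \<i> \<cdot>\<^sub>m J1) = cmat (sym_mat2 p q r) - \<i> \<cdot>\<^sub>m J1"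
    by (simp add: mat_adjoint_minus[of _ 2 2] mat_adjoint_cmat mat_adjoint_smult_Jmodes)
  moreover have "(cmod (complex_of_real q + \<i>))\<^sup>2 = q\<^sup>2 + 1" by (simp add: cmod_power2)
  moreover have "0 \<le> r"
  proof (rule ccontr)
    assume "\<not> 0 \<le> r"
    then have "p * r < 0" using p by (simp add: mult_pos_neg)
    then show False using pr by (smt (verit) zero_le_power2)
  qed
  ultimately show "psd (cmat (sym_mat2 p q r) - \<i> \<cdot>\<^sub>m Jmodes 1 {})"
    using psd_hermitian_2x2_iff[OF C] p pr by simp
qed simp_all

lemma is_CM_1D:
  assumes "is_CM 1 g"
  shows "g \<in> carrier_mat 2 2" "mat_adjoint (cmat g) = cmat g"
    "psd (cmat g - \<i> \<cdot>\<^sub>m J1)" "psd (cmat g - (- \<i>) \<cdot>\<^sub>m J1)"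
proof -
  show g: "g \<in> carrier_mat 2 2" using assms unfolding is_CM_def by simp
  show "mat_adjoint (cmat g) = cmat g" using assms unfolding is_CM_def
    by (simp add: mat_adjoint_cmat)
  show P: "psd (cmat g - \<i> \<cdot>\<^sub>m J1)" using assms unfolding is_CM_def loewner_ge_def by simp
  have "map_mat cnj (cmat g - \<i> \<cdot>\<^sub>m J1) = cmat g - (- \<i>) \<cdot>\<^sub>m J1"
    using g by (simp add: map_cnj_minus_mat[of _ 2 2])
  then show "psd (cmat g - (- \<i>) \<cdot>\<^sub>m J1)" using psd_map_cnj[OF P] by simp
qed

lemma pure_rescaling_bounds:
  fixes a d x y :: real
  assumes a: "0 \<le> a" and d: "0 \<le> d"
    and h1: "x\<^sup>2 + (y + 1)\<^sup>2 \<le> a * d" and h2: "x\<^sup>2 + (y - 1)\<^sup>2 \<le> a * d"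
  defines "c \<equiv> 1 / sqrt (a * d - x\<^sup>2)"
  shows "0 < c" "c \<le> 1" "c\<^sup>2 * (a * d - x\<^sup>2) = 1" "y\<^sup>2 \<le> (1 - c)\<^sup>2 * (a * d - x\<^sup>2)" "0 < a"
proof -
  define s where "s = sqrt (a * d - x\<^sup>2)"
  have "(1 + \<bar>y\<bar>)\<^sup>2 \<le> a * d - x\<^sup>2"
    using h1 h2 by (cases "0 \<le> y") (simp_all add: power2_eq_square algebra_simps)
  then have sge: "1 + \<bar>y\<bar> \<le> s" and s2: "s\<^sup>2 = a * d - x\<^sup>2"
    unfolding s_def using real_le_rsqrt by (force, smt (verit) real_sqrt_pow2 zero_le_power2)
  then have cs: "c * s = 1" and "0 < s" unfolding c_def s_def[symmetric] by auto
  then show "0 < c" "c \<le> 1" using sge unfolding c_def s_def[symmetric] by simp_all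
  show "c\<^sup>2 * (a * d - x\<^sup>2) = 1" using cs s2 by (metis power_mult_distrib power_one)
  have "\<bar>y\<bar>\<^sup>2 \<le> (s - 1)\<^sup>2" using sge by (intro power_mono) simp_all
  also have "s - 1 = (1 - c) * s" using cs by (simp add: algebra_simps)
  finally show "y\<^sup>2 \<le> (1 - c)\<^sup>2 * (a * d - x\<^sup>2)" using s2 by (simp add: power_mult_distrib)
  have "0 < a * d" using h1
    by (smt (verit) zero_le_power2 \<open>(1 + \<bar>y\<bar>)\<^sup>2 \<le> a * d - x\<^sup>2\<close> one_le_power abs_ge_zero)
  then show "0 < a" using a d by (auto simp: zero_less_mult_iff)
qed

(* The witness is the rescaled real part c Re K with c = (det Re K)^(-1/2): it is pure by
   construction, and K >= +-iJ1 gives 1 + |Im K01| <= (det Re K)^(1/2), which is exactly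
   what K >= c Re K needs. *)
lemma pure_CM_below:
  assumes K: "(K::complex mat) \<in> carrier_mat 2 2" and hK: "mat_adjoint K = K"
    and P1: "psd (K - \<i> \<cdot>\<^sub>m J1)" and P2: "psd (K - (- \<i>) \<cdot>\<^sub>m J1)"
  shows "\<exists>\<gamma>. is_CM 1 \<gamma> \<and> det \<gamma> = 1 \<and> psd (K - cmat \<gamma>)"
proof -
  define a d x y where "a = Re (K $$ (0,0))" and "d = Re (K $$ (1,1))"
    and "x = Re (K $$ (0,1))" and "y = Im (K $$ (0,1))"
  have KJ: "K - c \<cdot>\<^sub>m J1 \<in> carrier_mat 2 2" for c
    using minus_carrier_mat[OF smult_carrier_mat[OF J1_carrier]] .
  have herm: "mat_adjoint (K - c \<cdot>\<^sub>m J1) = K - c \<cdot>\<^sub>m J1" if "cnj c = - c" for c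
    using K hK mat_adjoint_smult_Jmodes[OF that] by (simp add: mat_adjoint_minus[of _ 2 2])
  have "0 \<le> a \<and> 0 \<le> d \<and> x\<^sup>2 + (y + 1)\<^sup>2 \<le> a * d"
    using psd_hermitian_2x2_iff[OF KJ herm[of \<i>]] P1 K unfolding a_def d_def x_def y_def
    by (simp add: cmod_power2)
  moreover have "x\<^sup>2 + (y - 1)\<^sup>2 \<le> a * d"
    using psd_hermitian_2x2_iff[OF KJ herm[of "- \<i>"]] P2 K unfolding a_def d_def x_def y_def
    by (simp add: cmod_power2)
  ultimately have a: "0 \<le> a" and d: "0 \<le> d" and bounds: "x\<^sup>2 + (y + 1)\<^sup>2 \<le> a * d" "x\<^sup>2 + (y - 1)\<^sup>2 \<le> a * d"
    by simp_all
  define c where "c = 1 / sqrt (a * d - x\<^sup>2)"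
  note c = pure_rescaling_bounds[OF a d bounds, folded c_def]
  define \<gamma> where "\<gamma> = sym_mat2 (c * a) (c * x) (c * d)"
  have pure: "(c * x)\<^sup>2 + 1 = c * a * (c * d)"
    using c(3) by (simp add: power2_eq_square algebra_simps)
  have "is_CM 1 \<gamma>" unfolding \<gamma>_def using c(1,5) pure by (intro is_CM_1_sym_mat2) simp_all
  moreover have "det \<gamma> = 1" unfolding \<gamma>_def det_sym_mat2 using pure by simp
  moreover have "psd (K - cmat \<gamma>)"
  proof -
    have "mat_adjoint (K - cmat \<gamma>) = K - cmat \<gamma>"
      using K hK unfolding \<gamma>_def by (simp add: mat_adjoint_minus[of _ 2 2] mat_adjoint_cmat)
    moreover have "(1 - c)\<^sup>2 * x\<^sup>2 + y\<^sup>2 \<le> (a - c * a) * (d - c * d)"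
      using c(4) by (simp add: power2_eq_square algebra_simps)
    moreover have "0 \<le> a - c * a" "0 \<le> d - c * d"
      using a d c(1,2) by (simp_all add: mult_left_le_one_le)
    moreover have "Re ((K - cmat \<gamma>) $$ (0,0)) = a - c * a" "Re ((K - cmat \<gamma>) $$ (1,1)) = d - c * d"
      using K unfolding \<gamma>_def a_def d_def by simp_all
    moreover have "(cmod ((K - cmat \<gamma>) $$ (0,1)))\<^sup>2 = (1 - c)\<^sup>2 * x\<^sup>2 + y\<^sup>2"
      unfolding cmod_power2 using K unfolding \<gamma>_def x_def y_def
      by (simp add: power2_eq_square algebra_simps)
    moreover have "K - cmat \<gamma> \<in> carrier_mat 2 2"
      unfolding \<gamma>_def by (rule minus_carrier_mat) simp
    ultimately show ?thesis using psd_hermitian_2x2_iff[of "K - cmat \<gamma>"] by simp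
  qed
  ultimately show ?thesis by blast
qed

section \<open>Three-mode covariance matrices\<close>

lemma Jmodes_Suc:
  "Jmodes (Suc n) S = dsum (Jmodes 1 (if 0 \<in> S then {0} else {})) (Jmodes n {k. Suc k \<in> S})"
proof (rule eq_matI)
  fix i j assume "i < dim_row (dsum (Jmodes 1 (if 0 \<in> S then {0} else {})) (Jmodes n {k. Suc k \<in> S}))"
    "j < dim_col (dsum (Jmodes 1 (if 0 \<in> S then {0} else {})) (Jmodes n {k. Suc k \<in> S}))"
  then have i: "i < 2 + 2 * n" and j: "j < 2 + 2 * n" by simp_all
  have low: "l < 2 \<Longrightarrow> l = 0 \<or> l = 1" for l :: nat by auto
  have high: "\<not> l < 2 \<Longrightarrow> \<exists>l'. l = l' + 2" for l :: nat by presburger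
  show "Jmodes (Suc n) S $$ (i, j) =
      dsum (Jmodes 1 (if 0 \<in> S then {0} else {})) (Jmodes n {k. Suc k \<in> S}) $$ (i, j)"
  proof (cases "i < 2"; cases "j < 2")
    assume "i < 2" "j < 2"
    then show ?thesis using low[of i] low[of j] by (auto simp: Jmodes_def dsum_def)
  next
    assume "i < 2" "\<not> j < 2"
    then obtain j' where "j = j' + 2" using high by blast
    then show ?thesis using low[OF \<open>i < 2\<close>] j by (auto simp: Jmodes_def dsum_def)
  next
    assume "\<not> i < 2" "j < 2"
    then obtain i' where "i = i' + 2" using high by blast
    then show ?thesis using low[OF \<open>j < 2\<close>] i by (auto simp: Jmodes_def dsum_def)
  next
    assume "\<not> i < 2" "\<not> j < 2"
    then obtain i' j' where "i = i' + 2" "j = j' + 2" using high by blast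
    then show ?thesis using i j by (simp add: Jmodes_def dsum_def)
  qed
qed simp_all

lemma smult_Jmodes_1_flip: "c \<cdot>\<^sub>m Jmodes 1 {0} = (- c) \<cdot>\<^sub>m J1"
  by (rule eq_matI) (auto simp: Jmodes_def)

lemma iJmodes_3:
  assumes "0 \<notin> S"
  shows "\<i> \<cdot>\<^sub>m Jmodes 3 S = dsum (\<i> \<cdot>\<^sub>m J1) (\<i> \<cdot>\<^sub>m Jmodes 2 {k. Suc k \<in> S})"
proof -
  have "Suc 2 = (3::nat)" by simp
  then show ?thesis using Jmodes_Suc[of 2 S] assms by (simp only: smult_dsum if_False)
qed

lemma iJmodes_2:
  "\<i> \<cdot>\<^sub>m Jmodes 2 {} = dsum (\<i> \<cdot>\<^sub>m J1) (\<i> \<cdot>\<^sub>m J1)"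
  "\<i> \<cdot>\<^sub>m Jmodes 2 {1} = dsum (\<i> \<cdot>\<^sub>m J1) ((- \<i>) \<cdot>\<^sub>m J1)"
proof -
  have sets: "{k. Suc k \<in> {}} = {}" "{k. Suc k \<in> {1}} = {0}" by auto
  show "\<i> \<cdot>\<^sub>m Jmodes 2 {} = dsum (\<i> \<cdot>\<^sub>m J1) (\<i> \<cdot>\<^sub>m J1)"
    "\<i> \<cdot>\<^sub>m Jmodes 2 {1} = dsum (\<i> \<cdot>\<^sub>m J1) ((- \<i>) \<cdot>\<^sub>m J1)"
    unfolding Jmodes_Suc[of 1, unfolded Suc_1] smult_dsum sets smult_Jmodes_1_flip by simp_all
qed

lemma cmat_split_blocks:
  assumes g: "\<gamma> \<in> carrier_mat (2 + m) (2 + m)" and sym: "transpose_mat \<gamma> = \<gamma>"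
  shows "blkA \<gamma> \<in> carrier_mat 2 2" "blkC \<gamma> \<in> carrier_mat 2 m" "blkB \<gamma> \<in> carrier_mat m m"
    "cmat \<gamma> = four_block_mat (cmat (blkA \<gamma>)) (cmat (blkC \<gamma>))
       (mat_adjoint (cmat (blkC \<gamma>))) (cmat (blkB \<gamma>))"
proof -
  obtain A C L B where sb: "split_block \<gamma> 2 2 = (A, C, L, B)" by (cases "split_block \<gamma> 2 2") auto
  have dims: "dim_row \<gamma> = 2 + m" "dim_col \<gamma> = 2 + m" using g by auto
  note blocks = split_block[OF sb dims]
  have b: "blkA \<gamma> = A" "blkC \<gamma> = C" "blkB \<gamma> = B" unfolding blkA_def blkC_def blkB_def sb by simp_all
  then show "blkA \<gamma> \<in> carrier_mat 2 2" "blkC \<gamma> \<in> carrier_mat 2 m" "blkB \<gamma> \<in> carrier_mat m m"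
    using blocks by auto
  have "L = transpose_mat C"
  proof (rule eq_matI)
    fix i j assume "i < dim_row (transpose_mat C)" "j < dim_col (transpose_mat C)"
    then have i: "i < m" and j: "j < 2" using blocks by auto
    have "\<gamma> $$ (i + 2, j) = \<gamma> $$ (j, i + 2)"
      using arg_cong[OF sym, of "\<lambda>M. M $$ (i + 2, j)"] g i j by simp
    then show "L $$ (i,j) = transpose_mat C $$ (i,j)"
      using sb i j g blocks unfolding split_block_def Let_def by auto
  qed (use blocks in auto)
  moreover have "cmat \<gamma> = four_block_mat (cmat A) (cmat C) (cmat L) (cmat B)"
    unfolding cmat_def blocks(5) by (rule map_four_block_mat) (use blocks in auto)
  ultimately show "cmat \<gamma> = four_block_mat (cmat (blkA \<gamma>)) (cmat (blkC \<gamma>))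
      (mat_adjoint (cmat (blkC \<gamma>))) (cmat (blkB \<gamma>))"
    unfolding b mat_adjoint_cmat by simp
qed

lemma loewner_schur_complement_iff:
  assumes g: "\<gamma> \<in> carrier_mat (2 + m) (2 + m)" "transpose_mat \<gamma> = \<gamma>"
    and T: "T \<in> carrier_mat m m" and R: "R \<in> carrier_mat 2 2" and R0: "R0 \<in> carrier_mat 2 2"
    and P0: "psd (cmat \<gamma> - dsum R0 T)"
  shows "loewner_ge (cmat (blkA \<gamma>) -
      cmat (blkC \<gamma>) * pinv (cmat (blkB \<gamma>) - T) * cmat (transpose_mat (blkC \<gamma>))) R
    \<longleftrightarrow> psd (cmat \<gamma> - dsum R T)"
proof -
  note b = cmat_split_blocks[OF g]
  have A: "cmat (blkA \<gamma>) \<in> carrier_mat 2 2" and C: "cmat (blkC \<gamma>) \<in> carrier_mat 2 m"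
    and B: "cmat (blkB \<gamma>) \<in> carrier_mat m m" using b by simp_all
  have "psd (four_block_mat (cmat (blkA \<gamma>) - R0) (cmat (blkC \<gamma>)) (mat_adjoint (cmat (blkC \<gamma>)))
      (cmat (blkB \<gamma>) - T))"
    using P0 four_block_mat_minus_dsum[OF A C mat_adjoint_carrier[OF C] B R0 T] b(4) by simp
  then have "psd (cmat (blkB \<gamma>) - T)"
    by (rule psd_four_block_matD(2)[OF minus_carrier_mat[OF R0] C mat_adjoint_carrier[OF C]
          minus_carrier_mat[OF T]])
  then have G: "pinv (cmat (blkB \<gamma>) - T) \<in> carrier_mat m m"
    by (rule pinv_hermitian(1)[OF minus_carrier_mat[OF T] psd_hermitian])
  have "cmat (blkA \<gamma>) - cmat (blkC \<gamma>) * pinv (cmat (blkB \<gamma>) - T) * cmat (transpose_mat (blkC \<gamma>))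
      \<in> carrier_mat 2 2"
    unfolding mat_adjoint_cmat[symmetric]
    by (rule minus_carrier_mat,
        rule mult_carrier_mat[OF mult_carrier_mat[OF C G] mat_adjoint_carrier[OF C]])
  then show ?thesis
    unfolding loewner_ge_def mat_adjoint_cmat[symmetric]
    using psd_minus_dsum_iff_schur_complement[OF A C B T R R0] P0 R b(4) by auto
qed

lemma loewner_Nmat_iff:
  assumes "is_CM 3 \<gamma>" and R: "R \<in> carrier_mat 2 2"
  shows "loewner_ge (Nmat \<gamma>) R \<longleftrightarrow> psd (cmat \<gamma> - dsum R (\<i> \<cdot>\<^sub>m Jmodes 2 {}))"
  unfolding Nmat_def
proof (rule loewner_schur_complement_iff[OF _ _ _ R J1_carrier[THEN smult_carrier_mat]])
  show "\<gamma> \<in> carrier_mat (2 + 4) (2 + 4)" "transpose_mat \<gamma> = \<gamma>"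
    using assms(1) unfolding is_CM_def by simp_all
  show "\<i> \<cdot>\<^sub>m Jmodes 2 {} \<in> carrier_mat 4 4" by simp
  show "psd (cmat \<gamma> - dsum (\<i> \<cdot>\<^sub>m J1) (\<i> \<cdot>\<^sub>m Jmodes 2 {}))"
    using assms(1) iJmodes_3[of "{}"] unfolding is_CM_def loewner_ge_def by simp
qed

lemma loewner_Ntmat_iff:
  assumes "is_CM 3 \<gamma>" "PPT \<gamma>" and R: "R \<in> carrier_mat 2 2"
  shows "loewner_ge (Ntmat \<gamma>) R \<longleftrightarrow> psd (cmat \<gamma> - dsum R (\<i> \<cdot>\<^sub>m Jmodes 2 {1}))"
  unfolding Ntmat_def
proof (rule loewner_schur_complement_iff[OF _ _ _ R J1_carrier[THEN smult_carrier_mat]])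
  show "\<gamma> \<in> carrier_mat (2 + 4) (2 + 4)" "transpose_mat \<gamma> = \<gamma>"
    using assms(1) unfolding is_CM_def by simp_all
  show "\<i> \<cdot>\<^sub>m Jmodes 2 {1} \<in> carrier_mat 4 4" by simp
  have "{k. Suc k \<in> {2}} = {1}" by auto
  then show "psd (cmat \<gamma> - dsum (\<i> \<cdot>\<^sub>m J1) (\<i> \<cdot>\<^sub>m Jmodes 2 {1}))"
    using assms(2) iJmodes_3[of "{2}"] unfolding PPT_def loewner_ge_def by simp
qed

lemma decouple_first_mode:
  assumes W: "W \<in> carrier_mat (2 + m) (2 + m)" and Q: "Q \<in> carrier_mat m m"
    and P1: "psd (W - dsum (\<i> \<cdot>\<^sub>m J1) Q)" and P2: "psd (W - dsum ((- \<i>) \<cdot>\<^sub>m J1) Q)"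
  shows "\<exists>\<gamma>. is_CM 1 \<gamma> \<and> psd (W - dsum (cmat \<gamma>) Q)"
proof -
  obtain X C C' Y where sb: "split_block W 2 2 = (X, C, C', Y)" by (cases "split_block W 2 2") auto
  have dims: "dim_row W = 2 + m" "dim_col W = 2 + m" using W by auto
  note blocks = split_block[OF sb dims]
  have X: "X \<in> carrier_mat 2 2" and C: "C \<in> carrier_mat 2 m" and C': "C' \<in> carrier_mat m 2"
    and Y: "Y \<in> carrier_mat m m" using blocks by auto
  have iJ: "c \<cdot>\<^sub>m J1 \<in> carrier_mat 2 2" for c using smult_carrier_mat[OF J1_carrier] .
  have "C' = mat_adjoint C"
    using P1 four_block_mat_minus_dsum[OF X C C' Y iJ Q] blocks(5)
      psd_four_block_matD(3)[OF minus_carrier_mat[OF iJ] C C' minus_carrier_mat[OF Q]] by metis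
  then have Weq: "W = four_block_mat X C (mat_adjoint C) Y" using blocks(5) by simp
  define K where "K = X - C * pinv (Y - Q) * mat_adjoint C"
  (* W >= R (+) Q iff K >= R, so K >= +-iJ_1, and K lies above a pure CM *)
  have iff: "psd (W - dsum R Q) \<longleftrightarrow> psd (K - R)" if "R \<in> carrier_mat 2 2" for R
    unfolding K_def Weq
    using psd_minus_dsum_iff_schur_complement[OF X C Y Q that iJ P1[unfolded Weq]] .
  have "dim_row C = 2" using C by simp
  then have K: "K \<in> carrier_mat 2 2" unfolding K_def by (intro carrier_matI) simp_all
  have PK: "psd (K - \<i> \<cdot>\<^sub>m J1)" "psd (K - (- \<i>) \<cdot>\<^sub>m J1)"
    using P1 P2 iff[OF iJ] by blast+
  have "mat_adjoint K = K"
    using hermitian_if_minus_hermitian[OF K iJ psd_hermitian[OF PK(1)]]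
      mat_adjoint_smult_Jmodes[of \<i>] by simp
  then obtain \<gamma> where "is_CM 1 \<gamma>" "psd (K - cmat \<gamma>)" using pure_CM_below[OF K _ PK] by blast
  moreover have "cmat \<gamma> \<in> carrier_mat 2 2" using is_CM_1D(1)[OF \<open>is_CM 1 \<gamma>\<close>] by simp
  ultimately show ?thesis using iff by blast
qed

lemma psd_rotate_modes:
  assumes W: "W \<in> carrier_mat 6 6" and a: "a \<in> carrier_mat 2 2" and b: "b \<in> carrier_mat 2 2"
    and c: "c \<in> carrier_mat 2 2" and P: "psd (W - dsum a (dsum b c))"
  shows "psd (cyclic_shift 2 W - dsum b (dsum c a))"
proof -
  have bc: "dsum b c \<in> carrier_mat 4 4" using dsum_carrier[OF b c] by simp
  have D: "dsum a (dsum b c) \<in> carrier_mat 6 6" using dsum3_carrier[OF a b c] .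
  have "cyclic_shift 2 (dsum a (dsum b c)) = dsum b (dsum c a)"
    using cyclic_shift_dsum[OF a bc] dsum_assoc[of b c a] by simp
  then show ?thesis
    using psd_cyclic_shift[OF P minus_carrier_mat[OF D], of 2] cyclic_shift_minus[OF W D] by simp
qed

lemma decouple_second_mode:
  assumes W: "W \<in> carrier_mat 6 6" and a: "a \<in> carrier_mat 2 2" and c: "c \<in> carrier_mat 2 2"
    and P1: "psd (W - dsum a (dsum (\<i> \<cdot>\<^sub>m J1) c))" and P2: "psd (W - dsum a (dsum ((- \<i>) \<cdot>\<^sub>m J1) c))"
  shows "\<exists>\<gamma>. is_CM 1 \<gamma> \<and> psd (cyclic_shift 2 W - dsum (cmat \<gamma>) (dsum c a))"
proof -
  have iJ: "z \<cdot>\<^sub>m J1 \<in> carrier_mat 2 2" for z using smult_carrier_mat[OF J1_carrier] .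
  have ca: "dsum c a \<in> carrier_mat 4 4" using dsum_carrier[OF c a] by simp
  have "cyclic_shift 2 W \<in> carrier_mat (2 + 4) (2 + 4)" using W by simp
  then show ?thesis
    using decouple_first_mode[OF _ ca] psd_rotate_modes[OF W a iJ c P1]
      psd_rotate_modes[OF W a iJ c P2] by blast
qed

lemma decouple_modes_BC:
  assumes W: "W \<in> carrier_mat 6 6" and W_real: "map_mat cnj W = W"
    and P1: "psd (W - dsum (0\<^sub>m 2 2) (dsum (\<i> \<cdot>\<^sub>m J1) (\<i> \<cdot>\<^sub>m J1)))"
    and P2: "psd (W - dsum (0\<^sub>m 2 2) (dsum (\<i> \<cdot>\<^sub>m J1) ((- \<i>) \<cdot>\<^sub>m J1)))"
  shows "\<exists>\<gamma>B \<gamma>C. is_CM 1 \<gamma>B \<and> is_CM 1 \<gamma>C \<and> psd (W - dsum (0\<^sub>m 2 2) (dsum (cmat \<gamma>B) (cmat \<gamma>C)))"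
proof -
  let ?Z = "0\<^sub>m 2 2 :: complex mat"
  have iJ: "z \<cdot>\<^sub>m J1 \<in> carrier_mat 2 2" for z using smult_carrier_mat[OF J1_carrier] .
  have P2': "psd (W - dsum ?Z (dsum ((- \<i>) \<cdot>\<^sub>m J1) (\<i> \<cdot>\<^sub>m J1)))"
    using psd_minus_map_cnj[OF W_real W dsum3_carrier[OF zero_carrier_mat iJ iJ] P2]
    by (simp add: map_mat_dsum)
  define W1 where "W1 = cyclic_shift 2 W"
  have W1: "W1 \<in> carrier_mat 6 6" and W1_real: "map_mat cnj W1 = W1"
    unfolding W1_def using W W_real by (simp_all add: map_mat_cyclic_shift)
  obtain \<gamma>B where B: "is_CM 1 \<gamma>B" and PB: "psd (W1 - dsum (cmat \<gamma>B) (dsum (\<i> \<cdot>\<^sub>m J1) ?Z))"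
    using decouple_second_mode[OF W _ iJ P1 P2'] unfolding W1_def by auto
  have cB: "cmat \<gamma>B \<in> carrier_mat 2 2" using is_CM_1D(1)[OF B] by simp
  have PB': "psd (W1 - dsum (cmat \<gamma>B) (dsum ((- \<i>) \<cdot>\<^sub>m J1) ?Z))"
    using psd_minus_map_cnj[OF W1_real W1 dsum3_carrier[OF cB iJ zero_carrier_mat] PB]
    by (simp add: map_mat_dsum)
  obtain \<gamma>C where C: "is_CM 1 \<gamma>C"
    and PC: "psd (cyclic_shift 2 W1 - dsum (cmat \<gamma>C) (dsum ?Z (cmat \<gamma>B)))"
    using decouple_second_mode[OF W1 cB _ PB PB'] by auto
  have "cyclic_shift 2 (cyclic_shift 2 W1) = W"
    unfolding W1_def cyclic_shift_cyclic_shift using cyclic_shift_dim[OF W] by simp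
  then have "psd (W - dsum ?Z (dsum (cmat \<gamma>B) (cmat \<gamma>C)))"
    using psd_rotate_modes[OF _ _ _ cB PC] W1 is_CM_1D(1)[OF C] by simp
  then show ?thesis using B C by blast
qed

lemma fully_separable_if_mode_A_bound:
  assumes \<gamma>: "\<gamma> \<in> carrier_mat 6 6" and A: "is_CM 1 \<gamma>A"
    and P1: "psd (cmat \<gamma> - dsum (cmat \<gamma>A) (\<i> \<cdot>\<^sub>m Jmodes 2 {}))"
    and P2: "psd (cmat \<gamma> - dsum (cmat \<gamma>A) (\<i> \<cdot>\<^sub>m Jmodes 2 {1}))"
  shows "fully_separable \<gamma>"
proof -
  have iJ: "z \<cdot>\<^sub>m J1 \<in> carrier_mat 2 2" for z using smult_carrier_mat[OF J1_carrier] .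
  have cA: "cmat \<gamma>A \<in> carrier_mat 2 2" using is_CM_1D(1)[OF A] by simp
  define W where "W = cmat \<gamma> - dsum (cmat \<gamma>A) (0\<^sub>m 4 4)"
  have D: "dsum (cmat \<gamma>A) (0\<^sub>m 4 4) \<in> carrier_mat 6 6"
    using dsum_carrier[OF cA, of "0\<^sub>m 4 4" 4] by simp
  have W: "W \<in> carrier_mat 6 6" unfolding W_def using minus_carrier_mat[OF D] .
  have W_real: "map_mat cnj W = W"
    unfolding W_def using \<gamma> D by (simp add: map_cnj_minus_mat[of _ 6 6] map_mat_dsum)
  have split: "cmat \<gamma> - dsum (cmat \<gamma>A) (dsum b c) = W - dsum (0\<^sub>m 2 2) (dsum b c)"
    if "b \<in> carrier_mat 2 2" "c \<in> carrier_mat 2 2" for b c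
    unfolding W_def
    using minus_dsum_split[of "cmat \<gamma>" 2 4 "cmat \<gamma>A" "dsum b c"] \<gamma> cA dsum_carrier[OF that]
    by simp
  obtain \<gamma>B \<gamma>C where B: "is_CM 1 \<gamma>B" and C: "is_CM 1 \<gamma>C"
    and PBC: "psd (W - dsum (0\<^sub>m 2 2) (dsum (cmat \<gamma>B) (cmat \<gamma>C)))"
    using decouple_modes_BC[OF W W_real] P1 P2 unfolding iJmodes_2 split[OF iJ iJ] by blast
  have "psd (cmat \<gamma> - cmat (dsum \<gamma>A (dsum \<gamma>B \<gamma>C)))"
    using PBC unfolding cmat_dsum split[OF is_CM_1D(1)[OF B, THEN carrier_cmat_iff[THEN iffD2]]
        is_CM_1D(1)[OF C, THEN carrier_cmat_iff[THEN iffD2]]] .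
  moreover have "dsum \<gamma>A (dsum \<gamma>B \<gamma>C) \<in> carrier_mat 6 6"
    using dsum3_carrier[OF is_CM_1D(1)[OF A] is_CM_1D(1)[OF B] is_CM_1D(1)[OF C]] .
  ultimately have "loewner_ge (cmat \<gamma>) (cmat (dsum \<gamma>A (dsum \<gamma>B \<gamma>C)))"
    unfolding loewner_ge_def using \<gamma> carrier_matD[of "dsum \<gamma>A (dsum \<gamma>B \<gamma>C)" 6 6]
    by (simp del: dim_dsum)
  then show ?thesis unfolding fully_separable_def using A B C by blast
qed

lemma pure_mode_A_bound_if_fully_separable:
  assumes \<gamma>: "\<gamma> \<in> carrier_mat 6 6" and FS: "fully_separable \<gamma>"
  shows "\<exists>\<gamma>A. is_CM 1 \<gamma>A \<and> det \<gamma>A = 1 \<and>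
    psd (cmat \<gamma> - dsum (cmat \<gamma>A) (\<i> \<cdot>\<^sub>m Jmodes 2 {})) \<and>
    psd (cmat \<gamma> - dsum (cmat \<gamma>A) (\<i> \<cdot>\<^sub>m Jmodes 2 {1}))"
proof -
  obtain \<gamma>A \<gamma>B \<gamma>C where A: "is_CM 1 \<gamma>A" and B: "is_CM 1 \<gamma>B" and C: "is_CM 1 \<gamma>C"
    and P: "loewner_ge (cmat \<gamma>) (cmat (dsum \<gamma>A (dsum \<gamma>B \<gamma>C)))"
    using FS unfolding fully_separable_def by blast
  have cA: "cmat \<gamma>A \<in> carrier_mat 2 2" and cB: "cmat \<gamma>B \<in> carrier_mat 2 2"
    and cC: "cmat \<gamma>C \<in> carrier_mat 2 2"
    using is_CM_1D(1) A B C by simp_all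
  have iJ: "z \<cdot>\<^sub>m J1 \<in> carrier_mat 2 2" for z using smult_carrier_mat[OF J1_carrier] .
  have P': "psd (cmat \<gamma> - dsum (cmat \<gamma>A) (dsum (cmat \<gamma>B) (cmat \<gamma>C)))"
    using P unfolding loewner_ge_def cmat_dsum by simp
  obtain \<gamma>A' where A': "is_CM 1 \<gamma>A'" "det \<gamma>A' = 1" and PA: "psd (cmat \<gamma>A - cmat \<gamma>A')"
    using pure_CM_below[OF cA is_CM_1D(2-4)[OF A]] by blast
  have cA': "cmat \<gamma>A' \<in> carrier_mat 2 2" using is_CM_1D(1)[OF A'(1)] by simp
  have bound: "psd (cmat \<gamma> - dsum (cmat \<gamma>A') (dsum (\<i> \<cdot>\<^sub>m J1) s))"
    if s: "s \<in> carrier_mat 2 2" and Ps: "psd (cmat \<gamma>C - s)" for s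
  proof -
    have "cmat \<gamma> - dsum (cmat \<gamma>A') (dsum (\<i> \<cdot>\<^sub>m J1) s) =
        (cmat \<gamma> - dsum (cmat \<gamma>A) (dsum (cmat \<gamma>B) (cmat \<gamma>C)))
        + dsum (cmat \<gamma>A - cmat \<gamma>A') (dsum (cmat \<gamma>B - \<i> \<cdot>\<^sub>m J1) (cmat \<gamma>C - s))"
      using minus_eq_minus_add_minus[OF _ dsum3_carrier[OF cA cB cC]
        dsum3_carrier[OF cA' iJ s], of "cmat \<gamma>"] \<gamma>
        dsum_minus[OF cA dsum_carrier[OF cB cC] cA' dsum_carrier[OF iJ s]] dsum_minus[OF cB cC iJ s]
      by simp
    moreover have c: "cmat \<gamma>A - cmat \<gamma>A' \<in> carrier_mat 2 2" "cmat \<gamma>B - \<i> \<cdot>\<^sub>m J1 \<in> carrier_mat 2 2"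
      "cmat \<gamma>C - s \<in> carrier_mat 2 2"
      using minus_carrier_mat[OF cA'] minus_carrier_mat[OF iJ] minus_carrier_mat[OF s] by simp_all
    moreover have "psd (dsum (cmat \<gamma>A - cmat \<gamma>A') (dsum (cmat \<gamma>B - \<i> \<cdot>\<^sub>m J1) (cmat \<gamma>C - s)))"
      using psd_dsum[OF PA c(1) psd_dsum[OF is_CM_1D(3)[OF B] c(2) Ps c(3)]
        dsum_carrier[OF c(2,3)]] .
    ultimately show ?thesis
      using psd_add[OF P' minus_carrier_mat[OF dsum3_carrier[OF cA cB cC]]
        _ dsum3_carrier[OF c]] by simp
  qed
  show ?thesis
    using A' bound[OF iJ is_CM_1D(3)[OF C]]
      bound[OF iJ is_CM_1D(4)[OF C]] unfolding iJmodes_2 by blast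
qed

theorem lemma4:
  fixes \<gamma> :: "real mat"
  assumes "is_CM 3 \<gamma>" and "PPT \<gamma>"
  shows "(fully_separable \<gamma> \<longleftrightarrow>
            (\<exists>\<gamma>A. is_CM 1 \<gamma>A \<and> loewner_ge (Ntmat \<gamma>) (cmat \<gamma>A) \<and> loewner_ge (Nmat \<gamma>) (cmat \<gamma>A)))
       \<and> (fully_separable \<gamma> \<longleftrightarrow>
            (\<exists>\<gamma>A. is_CM 1 \<gamma>A \<and> det \<gamma>A = 1 \<and>
                  loewner_ge (Ntmat \<gamma>) (cmat \<gamma>A) \<and> loewner_ge (Nmat \<gamma>) (cmat \<gamma>A)))"
proof -
  have \<gamma>: "\<gamma> \<in> carrier_mat 6 6" using assms(1) unfolding is_CM_def by simp
  have bound_iff: "loewner_ge (Ntmat \<gamma>) (cmat \<gamma>A) \<and> loewner_ge (Nmat \<gamma>) (cmat \<gamma>A) \<longleftrightarrow>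
      psd (cmat \<gamma> - dsum (cmat \<gamma>A) (\<i> \<cdot>\<^sub>m Jmodes 2 {})) \<and>
      psd (cmat \<gamma> - dsum (cmat \<gamma>A) (\<i> \<cdot>\<^sub>m Jmodes 2 {1}))"
    if "is_CM 1 \<gamma>A" for \<gamma>A
    using loewner_Nmat_iff[OF assms(1)] loewner_Ntmat_iff[OF assms] is_CM_1D(1)[OF that] by auto
  have "\<exists>\<gamma>A. is_CM 1 \<gamma>A \<and> det \<gamma>A = 1 \<and> loewner_ge (Ntmat \<gamma>) (cmat \<gamma>A) \<and> loewner_ge (Nmat \<gamma>) (cmat \<gamma>A)"
    if "fully_separable \<gamma>"
    using pure_mode_A_bound_if_fully_separable[OF \<gamma> that] bound_iff by blast
  moreover have "fully_separable \<gamma>"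
    if "is_CM 1 \<gamma>A" "loewner_ge (Ntmat \<gamma>) (cmat \<gamma>A)" "loewner_ge (Nmat \<gamma>) (cmat \<gamma>A)" for \<gamma>A
    using fully_separable_if_mode_A_bound[OF \<gamma> that(1)] bound_iff[OF that(1)] that(2,3) by blast
  ultimately show ?thesis by blast
qed

end
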